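(* Let $(\mathcal{M},\tau)$ be a II$_1$ factor, let $\{\alpha_k\}_{k\in\mathbb{N}}$ be a summable sequence of positive reals, and let $(\{E^k_\lambda\}_{\lambda\in I_k})_{k\in\mathbb{N}}$ be an $\{\alpha_k\}$-compatible sequence of brsr's in $\mathcal{M}$. Then there exists a brsr $\{E_\lambda\}_{\lambda\in I}$ in $\mathcal{M}$ which strongly refines $\{E^k_\lambda\}$ for every $k\in\mathbb{N}$. Moreover, if $\mathcal{A}\subseteq\mathcal{M}$ is a masa and $E^k_\lambda\in\mathcal{A}$ for all $k$ and $\lambda$, then $\{E_\lambda\}$ can be chosen with all $E_\lambda\in\mathcal{A}$.
   Context: $\tau$ is the faithful normal tracial state of $\mathcal{M}$; $\mathcal{P}(\mathcal{M})$ denotes the projections of $\mathcal{M}$ with the strong operator topology. For $I=[\alpha,\beta]$ and $p\in\mathcal{P}(\mathcal{M})$, a brsr (bounded right spectral resolution) of $p$ is a decreasing, SOT right-continuous map $E:I\to\mathcal{P}(\mathcal{M})$, $\lambda\mapsto E_\lambda$, with $E_\beta=0$, $E_\alpha=p$. For brsr's $\{E_\lambda\}_{\lambda\in[\alpha,\beta]}$ and $\{E'_\lambda\}_{\lambda\in[\alpha',\beta']}$, $(\{E'_\lambda\},f)$ is a strong refinement of $\{E_\lambda\}$ if $f:[\alpha,\beta]\to[\alpha',\beta']$ is increasing (non-decreasing), right-continuous, $f(\beta)=\beta'$, $E_\lambda=E'_{f(\lambda)}$ for all $\lambda$, $f(\lambda)\ge\lambda$ for all $\lambda$, and $f(\lambda)-f(\mu)\ge\lambda-\mu$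 for all $\lambda>\mu$; we then say $\{E'_\lambda\}$ strongly refines $\{E_\lambda\}$. A sequence $(\{E^k_\lambda\}_{\lambda\in I_k})_{k\in\mathbb{N}}$ of brsr's is $\{\alpha_k\}$-compatible if: (1) there are $\alpha,\beta\ge0$ with $I_k=[\alpha,\beta+\sum_{i=1}^k\alpha_i]$ for every $k$; (2) for every $k$ there is $f_k:I_k\to I_{k+1}$ such that $(\{E^{k+1}_\lambda\},f_k)$ is a strong refinement of $\{E^k_\lambda\}$; (3) $f_k(\lambda)-\lambda\le\alpha_k$ for all $\lambda\in I_k$ and all $k$. *)

theory Defs
  imports "HOL-Analysis.Analysis"
begin

class complex_vector = real_vector +
  fixes scaleC :: "complex \<Rightarrow> 'a \<Rightarrow> 'a"
  assumes scaleC_add_right: "scaleC a (x + y) = scaleC a x + scaleC a y"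
    and scaleC_add_left: "scaleC (a + b) x = scaleC a x + scaleC b x"
    and scaleC_scaleC: "scaleC a (scaleC b x) = scaleC (a * b) x"
    and scaleC_one: "scaleC 1 x = x"
    and scaleR_scaleC: "scaleR r x = scaleC (complex_of_real r) x"

class complex_inner = complex_vector + real_normed_vector +
  fixes cinner :: "'a \<Rightarrow> 'a \<Rightarrow> complex"
  assumes cinner_add_left: "cinner (x + y) z = cinner x z + cinner y z"
    and cinner_scaleC_left: "cinner (scaleC a x) y = cnj a * cinner x y"
    and cinner_commute: "cinner x y = cnj (cinner y x)"
    and cinner_self_nonneg: "Im (cinner x x) = 0 \<and> Re (cinner x x) \<ge> 0"
    and cinner_self_eq_zero: "cinner x x = 0 \<longleftrightarrow> x = 0"
    and norm_eq_sqrt_cinner: "norm x = sqrt (Re (cinner x x))"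

class chilbert_space = complex_inner + complete_space

definition clinear_op :: "('h::complex_vector \<Rightarrow> 'h) \<Rightarrow> bool" where
  "clinear_op T \<longleftrightarrow> (\<forall>x y. T (x + y) = T x + T y) \<and> (\<forall>c x. T (scaleC c x) = scaleC c (T x))"

definition bounded_op :: "('h::complex_inner \<Rightarrow> 'h) \<Rightarrow> bool" where
  "bounded_op T \<longleftrightarrow> clinear_op T \<and> (\<exists>K. \<forall>x. norm (T x) \<le> K * norm x)"

definition adj :: "('h::complex_inner \<Rightarrow> 'h) \<Rightarrow> ('h \<Rightarrow> 'h)" where
  "adj T = (SOME S. \<forall>x y. cinner (T x) y = cinner x (S y))"

definition op_add :: "('h::complex_vector \<Rightarrow> 'h) \<Rightarrow> ('h \<Rightarrow> 'h) \<Rightarrow> ('h \<Rightarrow> 'h)" where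
  "op_add A B = (\<lambda>x. A x + B x)"

definition op_scale :: "complex \<Rightarrow> ('h::complex_vector \<Rightarrow> 'h) \<Rightarrow> ('h \<Rightarrow> 'h)" where
  "op_scale c A = (\<lambda>x. scaleC c (A x))"

definition commutant :: "('h::complex_inner \<Rightarrow> 'h) set \<Rightarrow> ('h \<Rightarrow> 'h) set" where
  "commutant S = {T. bounded_op T \<and> (\<forall>A\<in>S. T \<circ> A = A \<circ> T)}"

definition star_subalgebra :: "('h::complex_inner \<Rightarrow> 'h) set \<Rightarrow> bool" where
  "star_subalgebra A \<longleftrightarrow> (\<forall>T\<in>A. bounded_op T) \<and>
     (\<forall>S\<in>A. \<forall>T\<in>A. op_add S T \<in> A \<and> S \<circ> T \<in> A) \<and>
     (\<forall>c. \<forall>T\<in>A. op_scale c T \<in> A) \<and> (\<forall>T\<in>A. adj T \<in> A)"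

definition von_neumann_algebra :: "('h::chilbert_space \<Rightarrow> 'h) set \<Rightarrow> bool" where
  "von_neumann_algebra M \<longleftrightarrow> star_subalgebra M \<and> id \<in> M \<and> commutant (commutant M) = M"

definition factor :: "('h::chilbert_space \<Rightarrow> 'h) set \<Rightarrow> bool" where
  "factor M \<longleftrightarrow> von_neumann_algebra M \<and> M \<inter> commutant M = range (\<lambda>c. op_scale c id)"

definition c_independent :: "('h::complex_vector \<Rightarrow> 'h) set \<Rightarrow> bool" where
  "c_independent F \<longleftrightarrow> (\<forall>G c. finite G \<and> G \<subseteq> F \<and> (\<lambda>x. \<Sum>g\<in>G. scaleC (c g) (g x)) = (\<lambda>x. 0)
      \<longrightarrow> (\<forall>g\<in>G. c g = 0))"

definition infinite_dimensional :: "('h::complex_vector \<Rightarrow> 'h) set \<Rightarrow> bool" where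
  "infinite_dimensional M \<longleftrightarrow> (\<exists>F\<subseteq>M. infinite F \<and> c_independent F)"

definition positive_op :: "('h::complex_inner \<Rightarrow> 'h) \<Rightarrow> bool" where
  "positive_op A \<longleftrightarrow> bounded_op A \<and> (\<forall>x. Im (cinner x (A x)) = 0 \<and> Re (cinner x (A x)) \<ge> 0)"

definition op_le :: "('h::complex_inner \<Rightarrow> 'h) \<Rightarrow> ('h \<Rightarrow> 'h) \<Rightarrow> bool" where
  "op_le A B \<longleftrightarrow> positive_op (\<lambda>x. B x - A x)"

definition is_projection :: "('h::complex_inner \<Rightarrow> 'h) \<Rightarrow> bool" where
  "is_projection p \<longleftrightarrow> bounded_op p \<and> p \<circ> p = p \<and> adj p = p"

definition projections :: "('h::complex_inner \<Rightarrow> 'h) set \<Rightarrow> ('h \<Rightarrow> 'h) set" where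
  "projections M = {p\<in>M. is_projection p}"

definition normal_functional :: "('h::chilbert_space \<Rightarrow> 'h) set \<Rightarrow> (('h \<Rightarrow> 'h) \<Rightarrow> complex) \<Rightarrow> bool" where
  "normal_functional M \<tau> \<longleftrightarrow>
    (\<forall>S A. S \<subseteq> M \<and> S \<noteq> {} \<and> (\<forall>B\<in>S. positive_op B)
       \<and> (\<forall>B\<in>S. \<forall>C\<in>S. \<exists>D\<in>S. op_le B D \<and> op_le C D)
       \<and> (\<exists>K. \<forall>B\<in>S. op_le B (op_scale (complex_of_real K) id))
       \<and> (\<forall>B\<in>S. op_le B A)
       \<and> (\<forall>C. bounded_op C \<and> adj C = C \<and> (\<forall>B\<in>S. op_le B C) \<longrightarrow> op_le A C)
     \<longrightarrow> Re (\<tau> A) = (SUP B\<in>S. Re (\<tau> B)))"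

definition faithful_normal_tracial_state ::
    "('h::chilbert_space \<Rightarrow> 'h) set \<Rightarrow> (('h \<Rightarrow> 'h) \<Rightarrow> complex) \<Rightarrow> bool" where
  "faithful_normal_tracial_state M \<tau> \<longleftrightarrow>
     (\<forall>A\<in>M. \<forall>B\<in>M. \<tau> (op_add A B) = \<tau> A + \<tau> B \<and> \<tau> (A \<circ> B) = \<tau> (B \<circ> A)) \<and>
     (\<forall>c. \<forall>A\<in>M. \<tau> (op_scale c A) = c * \<tau> A) \<and>
     (\<forall>A\<in>M. positive_op A \<longrightarrow> Im (\<tau> A) = 0 \<and> Re (\<tau> A) \<ge> 0) \<and>
     \<tau> id = 1 \<and>
     (\<forall>A\<in>M. positive_op A \<and> \<tau> A = 0 \<longrightarrow> A = (\<lambda>x. 0)) \<and>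
     normal_functional M \<tau>"

definition II1_factor :: "('h::chilbert_space \<Rightarrow> 'h) set \<Rightarrow> (('h \<Rightarrow> 'h) \<Rightarrow> complex) \<Rightarrow> bool" where
  "II1_factor M \<tau> \<longleftrightarrow> factor M \<and> infinite_dimensional M \<and> faithful_normal_tracial_state M \<tau>"

definition abelian_star_subalgebra_of :: "('h::chilbert_space \<Rightarrow> 'h) set \<Rightarrow> ('h \<Rightarrow> 'h) set \<Rightarrow> bool" where
  "abelian_star_subalgebra_of M A \<longleftrightarrow> A \<subseteq> M \<and> star_subalgebra A \<and> (\<forall>S\<in>A. \<forall>T\<in>A. S \<circ> T = T \<circ> S)"

definition masa :: "('h::chilbert_space \<Rightarrow> 'h) set \<Rightarrow> ('h \<Rightarrow> 'h) set \<Rightarrow> bool" where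
  "masa M A \<longleftrightarrow> abelian_star_subalgebra_of M A \<and>
     (\<forall>B. abelian_star_subalgebra_of M B \<and> A \<subseteq> B \<longrightarrow> B = A)"

definition brsr :: "('h::chilbert_space \<Rightarrow> 'h) set \<Rightarrow> real \<Rightarrow> real \<Rightarrow> ('h \<Rightarrow> 'h) \<Rightarrow> (real \<Rightarrow> 'h \<Rightarrow> 'h) \<Rightarrow> bool" where
  "brsr M a b p E \<longleftrightarrow> a \<le> b \<and> p \<in> projections M \<and>
     (\<forall>l\<in>{a..b}. E l \<in> projections M) \<and>
     (\<forall>l\<in>{a..b}. \<forall>m\<in>{a..b}. l \<le> m \<longrightarrow> op_le (E m) (E l)) \<and>
     (\<forall>l\<in>{a..b}. \<forall>x. ((\<lambda>m. E m x) \<longlongrightarrow> E l x) (at l within {l..b})) \<and>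
     E b = (\<lambda>x. 0) \<and> E a = p"

definition strong_refinement :: "real \<Rightarrow> real \<Rightarrow> (real \<Rightarrow> 'h \<Rightarrow> 'h) \<Rightarrow> (real \<Rightarrow> real)
     \<Rightarrow> real \<Rightarrow> real \<Rightarrow> (real \<Rightarrow> 'h \<Rightarrow> 'h) \<Rightarrow> bool" where
  "strong_refinement a' b' E' f a b E \<longleftrightarrow>
     (\<forall>l\<in>{a..b}. f l \<in> {a'..b'}) \<and> mono_on {a..b} f \<and>
     (\<forall>l\<in>{a..b}. (f \<longlongrightarrow> f l) (at l within {l..b})) \<and>
     f b = b' \<and>
     (\<forall>l\<in>{a..b}. E l = E' (f l) \<and> f l \<ge> l) \<and>
     (\<forall>l\<in>{a..b}. \<forall>m\<in>{a..b}. l > m \<longrightarrow> f l - f m \<ge> l - m)"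

definition strongly_refines :: "real \<Rightarrow> real \<Rightarrow> (real \<Rightarrow> 'h \<Rightarrow> 'h)
     \<Rightarrow> real \<Rightarrow> real \<Rightarrow> (real \<Rightarrow> 'h \<Rightarrow> 'h) \<Rightarrow> bool" where
  "strongly_refines a' b' E' a b E \<longleftrightarrow> (\<exists>f. strong_refinement a' b' E' f a b E)"

text \<open>Right endpoint of I_k = [a, b + sum_{i=1}^k alpha_i].\<close>
definition Iend :: "(nat \<Rightarrow> real) \<Rightarrow> real \<Rightarrow> nat \<Rightarrow> real" where
  "Iend al b k = b + (\<Sum>i=1..k. al i)"

text \<open>Sequence (E^k)_{k>=1} of brsr's is {alpha_k}-compatible, with I_k = [a, Iend al b k].\<close>
definition compatible :: "('h::chilbert_space \<Rightarrow> 'h) set \<Rightarrow> (nat \<Rightarrow> real) \<Rightarrow> real \<Rightarrow> real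
     \<Rightarrow> (nat \<Rightarrow> real \<Rightarrow> 'h \<Rightarrow> 'h) \<Rightarrow> bool" where
  "compatible M al a b EE \<longleftrightarrow> a \<ge> 0 \<and> b \<ge> 0 \<and>
     (\<forall>k\<ge>1. (\<exists>p. brsr M a (Iend al b k) p (EE k)) \<and>
        (\<exists>f. strong_refinement a (Iend al b (k+1)) (EE (k+1)) f a (Iend al b k) (EE k) \<and>
             (\<forall>l\<in>{a..Iend al b k}. f l - l \<le> al k)))"

end

theory Submission
  imports Defs
begin

(* Write D_n for E^(n+1) and g_n for the refinement maps. The composites
   g_(n+j-1) o ... o g_n increase pointwise in j and move each point by at most
   alpha_(n+1) + ... + alpha_(n+j), so by summability they converge to maps
   F_n : I_n -> [a, B], B = b + sum alpha_k, which inherit monotonicity, right continuity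
   and the slope condition F_n l - F_n m >= l - m, and satisfy F_(n+1) o g_n = F_n.
   The common refinement is E_mu = SOT-lim_n D_n (t_n mu), where t_n mu is the least l
   with mu <= F_n l. Since t_(n+1) mu <= g_n (t_n mu), these projections increase with n,
   so the strong limit exists and is a projection; it stays in M, or in a masa A,
   because both are closed under strong limits of increasing sequences of projections
   (by the double commutant property, resp. by maximality). On the point mu = F_n l the
   sequence is eventually D_n l, so E (F_n l) = D_n l and (E, F_n) is a strong
   refinement of D_n. *)

section \<open>Complex inner product spaces\<close>

lemma scaleC_zero_left [simp]: "scaleC 0 (x::'a::complex_vector) = 0"
  using scaleR_scaleC[of 0 x] by simp

lemma scaleC_zero_right [simp]: "scaleC a (0::'a::complex_vector) = 0"
  using scaleC_add_right[of a 0 0] by simp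

lemma scaleC_minus_right: "scaleC c (- x::'a::complex_vector) = - scaleC c x"
  using scaleC_add_right[of c "-x" x] by (simp add: eq_neg_iff_add_eq_0)

declare scaleC_one [simp]

lemma mult_cnj_self: "z * cnj z = (complex_of_real (cmod z))^2"
  by (metis complex_norm_square of_real_power)

lemma cinner_add_right: "cinner x (y + z) = cinner x y + cinner (x::'a::complex_inner) z"
  by (metis cinner_commute cinner_add_left complex_cnj_add)

lemma cinner_scaleC_right: "cinner x (scaleC c y) = c * cinner (x::'a::complex_inner) y"
  by (metis cinner_commute cinner_scaleC_left complex_cnj_cnj complex_cnj_mult)

lemma cinner_zero_left [simp]: "cinner 0 (x::'a::complex_inner) = 0"
  using cinner_add_left[of 0 0 x] by simp

lemma cinner_zero_right [simp]: "cinner x (0::'a::complex_inner) = 0"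
  using cinner_add_right[of x 0 0] by simp

lemma cinner_minus_right: "cinner x (- y::'a::complex_inner) = - cinner x y"
  using cinner_add_right[of x y "-y"] by (simp add: eq_neg_iff_add_eq_0 add.commute)

lemma cinner_diff_right: "cinner x (y - z::'a::complex_inner) = cinner x y - cinner x z"
  using cinner_add_right[of x y "-z"] by (simp add: cinner_minus_right)

lemma cinner_self: "cinner x x = complex_of_real ((norm (x::'a::complex_inner))^2)"
  using cinner_self_nonneg[of x] norm_eq_sqrt_cinner[of x] by (simp add: complex_eq_iff)

lemma cinner_self_Re: "Re (cinner x x) = (norm (x::'a::complex_inner))^2"
  by (simp add: cinner_self)

lemma norm_scaleC: "norm (scaleC c (x::'a::complex_inner)) = cmod c * norm x"
proof -
  have "complex_of_real ((norm (scaleC c x))^2) = cnj c * c * cinner x x"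
    by (metis cinner_scaleC_left cinner_scaleC_right cinner_self mult.assoc)
  also have "\<dots> = complex_of_real ((cmod c * norm x)^2)"
    by (simp add: cinner_self mult_cnj_self power_mult_distrib mult.commute)
  finally show ?thesis
    by (metis norm_ge_zero of_real_eq_iff power2_eq_iff_nonneg zero_le_mult_iff)
qed

lemma norm_add_sq:
  "(norm (x + y::'a::complex_inner))^2 = (norm x)^2 + (norm y)^2 + 2 * Re (cinner x y)"
proof -
  have "Re (cinner y x) = Re (cinner x y)" by (subst cinner_commute) simp
  then show ?thesis
    by (simp add: cinner_self_Re[symmetric] cinner_add_left cinner_add_right)
qed

lemma norm_diff_sq:
  "(norm (x - y::'a::complex_inner))^2 = (norm x)^2 + (norm y)^2 - 2 * Re (cinner x y)"
  using norm_add_sq[of x "-y"] by (simp add: cinner_minus_right)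

lemma cinner_cauchy_schwarz: "cmod (cinner x y) \<le> norm x * norm (y::'a::complex_inner)"
proof (cases "y = 0")
  case True
  then show ?thesis by simp
next
  case False
  define c where "c = cinner y x / complex_of_real ((norm y)^2)"
  have ny: "norm y > 0" using False by simp
  have "0 \<le> (norm (x - scaleC c y))^2" by simp
  also have "\<dots> = (norm x)^2 + (cmod c * norm y)^2 - 2 * Re (cinner x (scaleC c y))"
    by (simp add: norm_diff_sq norm_scaleC)
  also have "cinner x (scaleC c y) = c * cinner x y" by (simp add: cinner_scaleC_right)
  also have "c * cinner x y = complex_of_real ((cmod (cinner x y))^2 / (norm y)^2)"
  proof -
    have "cinner y x = cnj (cinner x y)" by (rule cinner_commute)
    then have "c * cinner x y = cnj (cinner x y) * cinner x y / complex_of_real ((norm y)^2)"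
      by (simp add: c_def)
    then show ?thesis by (simp add: mult.commute mult_cnj_self)
  qed
  also have "cmod c = cmod (cinner x y) / (norm y)^2"
    by (simp add: c_def norm_divide cinner_commute[of y x] norm_power)
  finally have "0 \<le> (norm x)^2 + (cmod (cinner x y))^2 / (norm y)^2 - 2 * ((cmod (cinner x y))^2 / (norm y)^2)"
    using ny by (simp add: power_divide power2_eq_square)
  then have "(cmod (cinner x y))^2 / (norm y)^2 \<le> (norm x)^2" by simp
  then have "(cmod (cinner x y))^2 \<le> (norm x)^2 * (norm y)^2" using ny by (simp add: divide_le_eq)
  then have "(cmod (cinner x y))^2 \<le> (norm x * norm y)^2" by (simp add: power_mult_distrib)
  then show ?thesis by (simp add: power2_le_iff_abs_le)
qed

lemma cinner_ext_right: "(\<And>x. cinner x y = cinner x z) \<Longrightarrow> (y::'a::complex_inner) = z"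
  by (metis cinner_diff_right cinner_self_eq_zero eq_iff_diff_eq_0)

lemma cinner_ext_left: "(\<And>x. cinner y x = cinner z x) \<Longrightarrow> (y::'a::complex_inner) = z"
  by (metis cinner_ext_right cinner_commute)

lemma bounded_bilinear_cinner: "bounded_bilinear (cinner :: 'a::complex_inner \<Rightarrow> 'a \<Rightarrow> complex)"
proof
  fix a a' b b' :: 'a and r :: real
  show "cinner (a + a') b = cinner a b + cinner a' b" by (rule cinner_add_left)
  show "cinner a (b + b') = cinner a b + cinner a b'" by (rule cinner_add_right)
  show "cinner (scaleR r a) b = scaleR r (cinner a b)"
    by (simp add: scaleR_scaleC cinner_scaleC_left scaleR_conv_of_real)
  show "cinner a (scaleR r b) = scaleR r (cinner a b)"
    by (simp add: scaleR_scaleC cinner_scaleC_right scaleR_conv_of_real)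
  show "\<exists>K. \<forall>a b. norm (cinner (a::'a) b) \<le> norm a * norm b * K"
    by (rule exI[of _ 1]) (simp add: cinner_cauchy_schwarz)
qed

lemmas tendsto_cinner [tendsto_intros] = bounded_bilinear.tendsto[OF bounded_bilinear_cinner]

section \<open>Bounded operators\<close>

lemma bounded_opD:
  assumes "bounded_op T"
  shows "T (x + y) = T x + T y" "T (scaleC c x) = scaleC c (T x)"
  using assms unfolding bounded_op_def clinear_op_def by auto

lemma bounded_op_bound:
  assumes "bounded_op (T::'a::complex_inner \<Rightarrow> 'a)"
  obtains K where "K > 0" "\<And>x. norm (T x) \<le> K * norm x"
proof -
  obtain K where K: "\<And>x. norm (T x) \<le> K * norm x" using assms unfolding bounded_op_def by auto
  have "norm (T x) \<le> max K 1 * norm x" for x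
    using K[of x] by (smt (verit) mult_right_mono norm_ge_zero)
  then show ?thesis using that[of "max K 1"] by simp
qed

lemma bounded_op_bounded_linear:
  assumes "bounded_op (T::'a::complex_inner \<Rightarrow> 'a)"
  shows "bounded_linear T"
proof
  fix x y :: 'a and r :: real
  show "T (x + y) = T x + T y" using bounded_opD[OF assms] by simp
  show "T (scaleR r x) = scaleR r (T x)" using bounded_opD[OF assms] by (simp add: scaleR_scaleC)
  obtain K where "\<And>x. norm (T x) \<le> K * norm x" using bounded_op_bound[OF assms] by blast
  then show "\<exists>K. \<forall>x. norm (T x) \<le> norm x * K" by (metis mult.commute)
qed

lemma bounded_op_tendsto:
  assumes "bounded_op T" "(f \<longlongrightarrow> l) F"
  shows "((\<lambda>t. T (f t)) \<longlongrightarrow> T l) F"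
  using bounded_linear.tendsto[OF bounded_op_bounded_linear[OF assms(1)] assms(2)] .

lemma bounded_op_add:
  assumes S: "bounded_op S" and T: "bounded_op (T::'a::complex_inner \<Rightarrow> 'a)"
  shows "bounded_op (\<lambda>x. S x + T x)"
proof -
  obtain K1 where K1: "\<And>x. norm (S x) \<le> K1 * norm x" using bounded_op_bound[OF S] by blast
  obtain K2 where K2: "\<And>x. norm (T x) \<le> K2 * norm x" using bounded_op_bound[OF T] by blast
  have "norm (S x + T x) \<le> (K1 + K2) * norm x" for x
    using norm_triangle_ineq[of "S x" "T x"] K1[of x] K2[of x] by (simp add: distrib_right)
  then show ?thesis using S T unfolding bounded_op_def clinear_op_def
    by (auto simp: scaleC_add_right)
qed

lemma bounded_op_diff:
  assumes S: "bounded_op S" and T: "bounded_op (T::'a::complex_inner \<Rightarrow> 'a)"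
  shows "bounded_op (\<lambda>x. S x - T x)"
proof -
  have "bounded_op (\<lambda>x. - T x)"
    using T unfolding bounded_op_def clinear_op_def by (auto simp: scaleC_minus_right)
  from bounded_op_add[OF S this] show ?thesis by simp
qed

lemma bounded_op_comp:
  assumes S: "bounded_op S" and T: "bounded_op (T::'a::complex_inner \<Rightarrow> 'a)"
  shows "bounded_op (S \<circ> T)"
proof -
  obtain K1 where K1: "K1 > 0" "\<And>x. norm (S x) \<le> K1 * norm x" using bounded_op_bound[OF S] by blast
  obtain K2 where K2: "\<And>x. norm (T x) \<le> K2 * norm x" using bounded_op_bound[OF T] by blast
  have "norm (S (T x)) \<le> (K1 * K2) * norm x" for x
    using K1(2)[of "T x"] K2[of x] K1(1) by (smt (verit) mult.assoc mult_left_mono)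
  then show ?thesis using S T unfolding bounded_op_def clinear_op_def by auto
qed

lemma bounded_op_scale:
  assumes T: "bounded_op (T::'a::complex_inner \<Rightarrow> 'a)"
  shows "bounded_op (op_scale c T)"
proof -
  obtain K where K: "\<And>x. norm (T x) \<le> K * norm x" using bounded_op_bound[OF T] by blast
  have "norm (scaleC c (T x)) \<le> (cmod c * K) * norm x" for x
    using K[of x] by (simp add: norm_scaleC mult.assoc mult_left_mono)
  moreover have "scaleC c (scaleC d x) = scaleC d (scaleC c (x::'a))" for d x
    by (simp add: scaleC_scaleC mult.commute)
  ultimately show ?thesis using T unfolding bounded_op_def clinear_op_def op_scale_def
    by (auto simp: scaleC_add_right)
qed

lemma bounded_op_id: "bounded_op (id::'a::complex_inner \<Rightarrow> 'a)"
  unfolding bounded_op_def clinear_op_def by (auto intro: exI[of _ 1])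

section \<open>Riesz representation and adjoints\<close>

lemma almost_norming_unit_vector:
  fixes \<phi> :: "'a::complex_inner \<Rightarrow> complex"
  assumes bl: "bounded_linear \<phi>" and sc: "\<And>c x. \<phi> (scaleC c x) = c * \<phi> x" and e: "e > 0"
  obtains y where "norm y \<le> 1" "\<phi> y = complex_of_real (cmod (\<phi> y))" "onorm \<phi> - e < cmod (\<phi> y)"
proof -
  have "bdd_above (range (\<lambda>x. norm (\<phi> x) / norm x))"
    using le_onorm[OF bl] by (intro bdd_aboveI2) blast
  moreover have "onorm \<phi> - e < (SUP x. norm (\<phi> x) / norm x)"
    using e unfolding onorm_def by simp
  ultimately obtain x where x: "onorm \<phi> - e < cmod (\<phi> x) / norm x"
    by (subst (asm) less_cSUP_iff) auto
  show thesis
  proof (cases "\<phi> x = 0")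
    case True
    then show ?thesis using x that[of 0] sc[of 0 0] by simp
  next
    case False
    then have "x \<noteq> 0" using sc[of 0 0] by auto
    \<comment> \<open>normalise \<open>x\<close> and rotate its phase so that \<open>\<phi>\<close> becomes real and
      positive\<close>
    define y where "y = scaleC (cnj (\<phi> x) / complex_of_real (cmod (\<phi> x) * norm x)) x"
    have "norm y = 1" using False \<open>x \<noteq> 0\<close> by (simp add: y_def norm_scaleC norm_divide norm_mult)
    moreover have "\<phi> y = complex_of_real (cmod (\<phi> x) / norm x)"
    proof -
      have "\<phi> y = cnj (\<phi> x) * \<phi> x / complex_of_real (cmod (\<phi> x) * norm x)"
        by (simp add: y_def sc)
      also have "\<dots> = complex_of_real (cmod (\<phi> x) * cmod (\<phi> x) / (cmod (\<phi> x) * norm x))"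
        by (simp only: mult.commute[of "cnj _"] mult_cnj_self power2_eq_square of_real_mult of_real_divide)
      finally show ?thesis using False by simp
    qed
    ultimately show ?thesis using x that[of y] by (simp add: norm_divide)
  qed
qed

lemma almost_norming_dist:
  fixes \<phi> :: "'a::complex_inner \<Rightarrow> complex"
  assumes add: "\<And>x y. \<phi> (x + y) = \<phi> x + \<phi> y"
    and bound: "\<And>x. cmod (\<phi> x) \<le> N * norm x" and N: "N > 0"
    and y: "norm y \<le> 1" "\<phi> y = complex_of_real (cmod (\<phi> y))" "N - d\<^sub>y < cmod (\<phi> y)"
    and z: "norm z \<le> 1" "\<phi> z = complex_of_real (cmod (\<phi> z))" "N - d\<^sub>z < cmod (\<phi> z)"
  shows "(norm (y - z))^2 \<le> 4 * ((d\<^sub>y + d\<^sub>z) / N)"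
proof -
  \<comment> \<open>by the parallelogram law, \<open>y\<close> and \<open>z\<close> are close because their sum has norm almost 2\<close>
  define d where "d = (d\<^sub>y + d\<^sub>z) / N"
  have "\<phi> (y + z) = complex_of_real (cmod (\<phi> y) + cmod (\<phi> z))"
    using add y(2) z(2) by simp
  then have "cmod (\<phi> y) + cmod (\<phi> z) \<le> N * norm (y + z)"
    using bound[of "y + z"] by (metis abs_of_nonneg add_nonneg_nonneg norm_ge_zero norm_of_real)
  moreover have "N * (2 - d) = 2 * N - (d\<^sub>y + d\<^sub>z)"
    using N unfolding d_def by (simp add: right_diff_distrib)
  ultimately have "2 - d < norm (y + z)"
    using y(3) z(3) N by (smt (verit) mult_le_cancel_left_pos)
  then have "4 - 4 * d \<le> (norm (y + z))^2"
  proof (cases "2 - d \<ge> 0")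
    case True
    then have "(2 - d)^2 \<le> (norm (y + z))^2"
      using \<open>2 - d < norm (y + z)\<close> by (simp add: power_mono)
    moreover have "4 - 4 * d \<le> (2 - d)^2" by (simp add: power2_eq_square algebra_simps)
    ultimately show ?thesis by linarith
  next
    case False
    then show ?thesis by (smt (verit) zero_le_power2)
  qed
  moreover have "(norm y)^2 \<le> 1" "(norm z)^2 \<le> 1"
    using y(1) z(1) by (simp_all add: power_le_one)
  ultimately show ?thesis
    using norm_add_sq[of y z] norm_diff_sq[of y z] unfolding d_def by linarith
qed

lemma almost_norming_sequence_Cauchy:
  fixes \<phi> :: "'a::complex_inner \<Rightarrow> complex"
  assumes add: "\<And>x y. \<phi> (x + y) = \<phi> x + \<phi> y"
    and bound: "\<And>x. cmod (\<phi> x) \<le> N * norm x" and N: "N > 0"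
    and y: "\<And>n. norm (y n) \<le> 1" "\<And>n. \<phi> (y n) = complex_of_real (cmod (\<phi> (y n)))"
      "\<And>n. N - 1 / real (Suc n) < cmod (\<phi> (y n))"
  shows "Cauchy y"
proof (rule metric_CauchyI)
  note dist_bound = almost_norming_dist[OF add bound N y(1,2,3) y(1,2,3)]
  fix e :: real
  assume e: "e > 0"
  obtain M0 :: nat where M0: "8 / (N * e^2) < real M0" using reals_Archimedean2 by blast
  show "\<exists>M. \<forall>m\<ge>M. \<forall>n\<ge>M. dist (y m) (y n) < e"
  proof (intro exI[of _ "Suc M0"] allI impI)
    fix m n
    assume "m \<ge> Suc M0" "n \<ge> Suc M0"
    then have "1 / real (Suc m) \<le> 1 / real (Suc M0)" "1 / real (Suc n) \<le> 1 / real (Suc M0)"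
      by (simp_all add: frac_le)
    then have "(1 / real (Suc m) + 1 / real (Suc n)) / N \<le> (2 / real (Suc M0)) / N"
      using N by (intro divide_right_mono) simp_all
    then have "(norm (y m - y n))^2 \<le> 4 * ((2 / real (Suc M0)) / N)"
      using dist_bound[of m n] by linarith
    also have "\<dots> < e^2"
    proof -
      have "8 < real M0 * (N * e^2)" using M0 N e by (simp add: divide_less_eq)
      moreover have "0 < N * e^2" using N e by simp
      ultimately have "8 < real (Suc M0) * N * e^2" by (simp add: algebra_simps)
      then show ?thesis using N by (simp add: pos_divide_less_eq mult.commute mult.left_commute)
    qed
    finally show "dist (y m) (y n) < e"
      using e by (simp add: dist_norm power_less_imp_less_base)
  qed
qed

lemma norming_vector_orthogonal_kernel:
  fixes \<phi> :: "'a::complex_inner \<Rightarrow> complex"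
  assumes add: "\<And>x y. \<phi> (x + y) = \<phi> x + \<phi> y" and sc: "\<And>c x. \<phi> (scaleC c x) = c * \<phi> x"
    and bound: "\<And>x. cmod (\<phi> x) \<le> N * norm x" and N: "N > 0"
    and u: "norm u = 1" "\<phi> u = complex_of_real N"
    and v: "cinner u v = 0"
  shows "\<phi> v = 0"
proof (rule ccontr)
  assume nz: "\<phi> v \<noteq> 0"
  \<comment> \<open>moving from \<open>u\<close> slightly towards \<open>w\<close> increases \<open>\<phi>\<close> to first order but
    the norm only to second order\<close>
  define w where "w = scaleC (cnj (\<phi> v)) v"
  define c where "c = (cmod (\<phi> v))^2"
  define t where "t = c / (N * ((norm w)^2 + 1))"
  define z where "z = u + scaleC (complex_of_real t) w"
  have c0: "c > 0" using nz by (simp add: c_def)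
  have t0: "t > 0" unfolding t_def
    by (rule divide_pos_pos[OF c0 mult_pos_pos[OF N]]) (simp add: add_nonneg_pos)
  have "\<phi> w = complex_of_real c"
    by (simp add: w_def sc c_def mult_cnj_self mult.commute)
  then have phi_z: "\<phi> z = complex_of_real (N + t * c)" by (simp add: z_def add sc u)
  have "cmod (\<phi> z) = N + t * c" unfolding phi_z norm_of_real using c0 t0 N by simp
  then have "N + t * c \<le> N * norm z" using bound[of z] by simp
  then have "(N + t * c)^2 \<le> N^2 * (norm z)^2"
    using c0 t0 N by (metis add_pos_pos mult_pos_pos less_le power_mono power_mult_distrib)
  moreover have "(norm z)^2 = 1 + t^2 * (norm w)^2"
    using norm_add_sq[of u "scaleC (complex_of_real t) w"] u t0
    by (simp add: z_def norm_scaleC cinner_scaleC_right w_def v power_mult_distrib)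
  ultimately have "2 * N * t * c + t^2 * c^2 \<le> N^2 * t^2 * (norm w)^2"
    by (simp add: power2_sum algebra_simps)
  moreover have "N^2 * t^2 * (norm w)^2 = (N * t) * (N * t * (norm w)^2)"
    by (simp add: power2_eq_square)
  moreover have "(N * t) * (2 * c) = 2 * N * t * c" by simp
  moreover have "0 \<le> t^2 * c^2" by simp
  ultimately have "(N * t) * (2 * c) \<le> (N * t) * (N * t * (norm w)^2)"
    by linarith
  then have "2 * c \<le> N * t * (norm w)^2" using t0 N by (simp add: mult_le_cancel_left_pos)
  also have "\<dots> = c * ((norm w)^2 / ((norm w)^2 + 1))"
    using N by (simp add: t_def)
  also have "\<dots> \<le> c"
    using c0 by (simp add: mult_left_le divide_le_eq add_nonneg_pos)
  finally show False using c0 by simp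
qed

lemma unit_vector_attaining_onorm:
  fixes \<phi> :: "'a::chilbert_space \<Rightarrow> complex"
  assumes add: "\<And>x y. \<phi> (x + y) = \<phi> x + \<phi> y" and sc: "\<And>c x. \<phi> (scaleC c x) = c * \<phi> x"
    and bl: "bounded_linear \<phi>" and N: "onorm \<phi> > 0"
  obtains u where "norm u = 1" "\<phi> u = complex_of_real (onorm \<phi>)"
proof -
  note bound = onorm[OF bl]
  have "\<exists>y. norm y \<le> 1 \<and> \<phi> y = complex_of_real (cmod (\<phi> y)) \<and> onorm \<phi> - 1 / real (Suc n) < cmod (\<phi> y)"
    for n using almost_norming_unit_vector[OF bl sc, of "1 / real (Suc n)"] by auto
  then obtain y where y: "\<And>n. norm (y n) \<le> 1" "\<And>n. \<phi> (y n) = complex_of_real (cmod (\<phi> (y n)))"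
    "\<And>n. onorm \<phi> - 1 / real (Suc n) < cmod (\<phi> (y n))"
    by metis
  have "Cauchy y" by (rule almost_norming_sequence_Cauchy[OF add bound N y])
  then obtain u where u: "y \<longlonglongrightarrow> u" using Cauchy_convergent_iff convergent_def by blast
  have "(\<lambda>n. cmod (\<phi> (y n))) \<longlonglongrightarrow> onorm \<phi>"
  proof (rule real_tendsto_sandwich[of "\<lambda>n. onorm \<phi> - 1 / real (Suc n)" _ _ "\<lambda>n. onorm \<phi>"])
    show "\<forall>\<^sub>F n in sequentially. onorm \<phi> - 1 / real (Suc n) \<le> cmod (\<phi> (y n))"
      using y(3) by (intro always_eventually allI less_imp_le)
    show "\<forall>\<^sub>F n in sequentially. cmod (\<phi> (y n)) \<le> onorm \<phi>"
      using y(1) N by (intro always_eventually allI order_trans[OF bound]) (simp add: mult_left_le)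
    show "(\<lambda>n. onorm \<phi> - 1 / real (Suc n)) \<longlonglongrightarrow> onorm \<phi>"
      using tendsto_diff[OF tendsto_const LIMSEQ_inverse_real_of_nat] by (simp add: divide_inverse)
  qed simp
  then have "(\<lambda>n. complex_of_real (cmod (\<phi> (y n)))) \<longlonglongrightarrow> complex_of_real (onorm \<phi>)"
    by (rule tendsto_of_real)
  then have "(\<lambda>n. \<phi> (y n)) \<longlonglongrightarrow> complex_of_real (onorm \<phi>)"
    using y(2) by simp
  then have phi_u: "\<phi> u = complex_of_real (onorm \<phi>)"
    using bounded_linear.tendsto[OF bl u] LIMSEQ_unique by blast
  have "norm u \<le> 1"
    by (rule LIMSEQ_le_const2[OF tendsto_norm[OF u]]) (use y(1) in auto)
  moreover have "onorm \<phi> \<le> onorm \<phi> * norm u" using bound[of u] phi_u N by simp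
  ultimately show thesis using that phi_u N by simp
qed

lemma riesz_representation:
  fixes \<phi> :: "'a::chilbert_space \<Rightarrow> complex"
  assumes add: "\<And>x y. \<phi> (x + y) = \<phi> x + \<phi> y"
    and sc: "\<And>c x. \<phi> (scaleC c x) = c * \<phi> x"
    and bd: "\<And>x. cmod (\<phi> x) \<le> K * norm x"
  shows "\<exists>z. \<forall>x. \<phi> x = cinner z x"
proof (cases "\<forall>x. \<phi> x = 0")
  case True
  then show ?thesis by (intro exI[of _ 0]) simp
next
  case False
  have bl: "bounded_linear \<phi>"
  proof
    show "\<phi> (scaleR r x) = scaleR r (\<phi> x)" for r x by (simp add: scaleR_scaleC sc scaleR_conv_of_real)
    show "\<exists>K. \<forall>x. norm (\<phi> x) \<le> norm x * K" using bd by (metis mult.commute)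
  qed (rule add)
  have N: "onorm \<phi> > 0" using onorm_pos_lt[OF bl] False by blast
  obtain u where u: "norm u = 1" "\<phi> u = complex_of_real (onorm \<phi>)"
    using unit_vector_attaining_onorm[OF add sc bl N] .
  show ?thesis
  proof (intro exI[of _ "scaleC (complex_of_real (onorm \<phi>)) u"] allI)
    fix x
    define v where "v = x - scaleC (cinner u x) u"
    have "cinner u v = 0"
      using u(1) by (simp add: v_def cinner_diff_right cinner_scaleC_right cinner_self)
    then have "\<phi> v = 0" by (rule norming_vector_orthogonal_kernel[OF add sc onorm[OF bl] N u])
    moreover have "x = v + scaleC (cinner u x) u" by (simp add: v_def)
    ultimately have "\<phi> x = cinner u x * complex_of_real (onorm \<phi>)" by (metis add sc u(2) add_0)
    then show "\<phi> x = cinner (scaleC (complex_of_real (onorm \<phi>)) u) x"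
      by (simp add: cinner_scaleC_left mult.commute)
  qed
qed

lemma adjoint_exists:
  assumes T: "bounded_op (T::'a::chilbert_space \<Rightarrow> 'a)"
  shows "\<exists>S. \<forall>x y. cinner (T x) y = cinner x (S y)"
proof -
  obtain K where K: "K > 0" "\<And>x. norm (T x) \<le> K * norm x" using bounded_op_bound[OF T] by blast
  have "\<exists>z. \<forall>x. cinner y (T x) = cinner z x" for y
  proof (rule riesz_representation)
    show "cinner y (T (x1 + x2)) = cinner y (T x1) + cinner y (T x2)" for x1 x2
      by (simp add: bounded_opD[OF T] cinner_add_right)
    show "cinner y (T (scaleC c x)) = c * cinner y (T x)" for c x
      by (simp add: bounded_opD[OF T] cinner_scaleC_right)
    show "cmod (cinner y (T x)) \<le> (norm y * K) * norm x" for x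
      using cinner_cauchy_schwarz[of y "T x"] mult_left_mono[OF K(2)[of x], of "norm y"]
      by (simp add: mult.assoc)
  qed
  then have "\<forall>y. \<exists>z. \<forall>x. cinner (T x) y = cinner x z" by (metis cinner_commute)
  then show ?thesis by metis
qed

lemma cinner_adj_right: "bounded_op (T::'a::chilbert_space \<Rightarrow> 'a) \<Longrightarrow> cinner (T x) y = cinner x (adj T y)"
  unfolding adj_def using someI_ex[OF adjoint_exists] by blast

lemma cinner_adj_left: "bounded_op (T::'a::chilbert_space \<Rightarrow> 'a) \<Longrightarrow> cinner (adj T x) y = cinner x (T y)"
  by (metis cinner_adj_right cinner_commute)

lemma adj_eqI:
  assumes "\<And>x y. cinner (T x) y = cinner x (S y)"
  shows "adj T = (S::'a::complex_inner \<Rightarrow> 'a)"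
proof -
  have "\<forall>x y. cinner (T x) y = cinner x (adj T y)"
    unfolding adj_def using someI_ex[of "\<lambda>S. \<forall>x y. cinner (T x) y = cinner x (S y)"] assms by blast
  then show ?thesis using assms by (metis cinner_ext_right ext)
qed

lemma bounded_op_adj:
  assumes T: "bounded_op (T::'a::chilbert_space \<Rightarrow> 'a)"
  shows "bounded_op (adj T)"
proof -
  obtain K where K: "K > 0" "\<And>x. norm (T x) \<le> K * norm x" using bounded_op_bound[OF T] by blast
  have "adj T (x + y) = adj T x + adj T y" for x y
    by (rule cinner_ext_right) (simp add: cinner_adj_right[OF T, symmetric] cinner_add_right)
  moreover have "adj T (scaleC c x) = scaleC c (adj T x)" for c x
    by (rule cinner_ext_right) (simp add: cinner_adj_right[OF T, symmetric] cinner_scaleC_right)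
  moreover have "norm (adj T y) \<le> K * norm y" for y
  proof -
    have "(norm (adj T y))^2 = Re (cinner (T (adj T y)) y)"
      by (simp add: cinner_self_Re[symmetric] cinner_adj_right[OF T])
    also have "\<dots> \<le> norm (T (adj T y)) * norm y"
      using complex_Re_le_cmod cinner_cauchy_schwarz order_trans by blast
    also have "\<dots> \<le> K * norm (adj T y) * norm y" using K(2) by (simp add: mult_right_mono)
    finally have "norm (adj T y) * norm (adj T y) \<le> norm (adj T y) * (K * norm y)"
      by (simp add: power2_eq_square mult_ac)
    then show ?thesis
      by (cases "adj T y = 0") (use K in \<open>simp_all add: mult_le_cancel_left_pos\<close>)
  qed
  ultimately show ?thesis unfolding bounded_op_def clinear_op_def by blast
qed

lemma adj_adj: "bounded_op (T::'a::chilbert_space \<Rightarrow> 'a) \<Longrightarrow> adj (adj T) = T"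
  by (rule adj_eqI) (simp add: cinner_adj_left)

lemma adj_comp:
  assumes "bounded_op (S::'a::chilbert_space \<Rightarrow> 'a)" "bounded_op T"
  shows "adj (S \<circ> T) = adj T \<circ> adj S"
  by (rule adj_eqI) (simp add: cinner_adj_right[OF assms(1)] cinner_adj_right[OF assms(2)])

section \<open>Projections\<close>

lemma projection_bounded: "is_projection P \<Longrightarrow> bounded_op P"
  unfolding is_projection_def by simp

lemma projection_idem: "is_projection P \<Longrightarrow> P (P x) = P x"
  unfolding is_projection_def by (metis comp_apply)

lemma projection_selfadjoint:
  "is_projection (P::'a::chilbert_space \<Rightarrow> 'a) \<Longrightarrow> cinner (P x) y = cinner x (P y)"
  using cinner_adj_right[of P x y] unfolding is_projection_def by simp

lemma projection_cinner_self:
  "is_projection (P::'a::chilbert_space \<Rightarrow> 'a) \<Longrightarrow> cinner x (P x) = complex_of_real ((norm (P x))^2)"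
  by (metis cinner_self projection_idem projection_selfadjoint)

lemma projection_norm_sq:
  assumes "is_projection (P::'a::chilbert_space \<Rightarrow> 'a)"
  shows "(norm x)^2 = (norm (P x))^2 + (norm (x - P x))^2"
proof -
  have "cinner (P x) (x - P x) = 0"
    by (simp add: cinner_diff_right projection_selfadjoint[OF assms] projection_idem[OF assms])
  then show ?thesis using norm_add_sq[of "P x" "x - P x"] by simp
qed

lemma projection_norm_le:
  assumes "is_projection (P::'a::chilbert_space \<Rightarrow> 'a)"
  shows "norm (P x) \<le> norm x"
proof -
  have "(norm (P x))^2 \<le> (norm x)^2" using projection_norm_sq[OF assms, of x] by simp
  then show ?thesis by simp
qed

lemma op_le_projection_iff:
  assumes P: "is_projection (P::'a::chilbert_space \<Rightarrow> 'a)" and Q: "is_projection Q"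
  shows "op_le P Q \<longleftrightarrow> (\<forall>x. norm (P x) \<le> norm (Q x))"
proof -
  have "cinner x (Q x - P x) = complex_of_real ((norm (Q x))^2 - (norm (P x))^2)" for x
    by (simp add: cinner_diff_right projection_cinner_self[OF P] projection_cinner_self[OF Q])
  moreover have "bounded_op (\<lambda>x. Q x - P x)"
    by (rule bounded_op_diff[OF projection_bounded[OF Q] projection_bounded[OF P]])
  ultimately show ?thesis unfolding op_le_def positive_op_def by simp
qed

lemma projection_le_absorb_left:
  assumes P: "is_projection (P::'a::chilbert_space \<Rightarrow> 'a)" and Q: "is_projection Q"
    and le: "\<And>x. norm (P x) \<le> norm (Q x)"
  shows "Q (P x) = P x"
proof -
  have "norm (P x) \<le> norm (Q (P x))" using le[of "P x"] projection_idem[OF P] by simp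
  then have "(norm (P x))^2 \<le> (norm (Q (P x)))^2" by (simp add: power_mono)
  then have "(norm (P x - Q (P x)))^2 \<le> 0"
    using projection_norm_sq[OF Q, of "P x"] by simp
  then show "Q (P x) = P x" by simp
qed

lemma projection_le_absorb_right:
  assumes P: "is_projection (P::'a::chilbert_space \<Rightarrow> 'a)" and Q: "is_projection Q"
    and le: "\<And>x. norm (P x) \<le> norm (Q x)"
  shows "P (Q x) = P x"
proof (rule cinner_ext_left)
  fix y
  have "cinner (P (Q x)) y = cinner x (Q (P y))"
    by (simp add: projection_selfadjoint[OF P] projection_selfadjoint[OF Q])
  then show "cinner (P (Q x)) y = cinner (P x) y"
    by (simp add: projection_le_absorb_left[OF P Q le] projection_selfadjoint[OF P])
qed

lemma projection_le_norm_diff: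
  assumes P: "is_projection (P::'a::chilbert_space \<Rightarrow> 'a)" and Q: "is_projection Q"
    and le: "\<And>x. norm (P x) \<le> norm (Q x)"
  shows "(norm (Q x - P x))^2 = (norm (Q x))^2 - (norm (P x))^2"
proof -
  have "cinner (Q x) (P x) = complex_of_real ((norm (P x))^2)"
    by (simp add: projection_selfadjoint[OF Q] projection_le_absorb_left[OF P Q le]
        projection_cinner_self[OF P])
  then show ?thesis using norm_diff_sq[of "Q x" "P x"] by simp
qed

section \<open>Strong limits of increasing sequences of projections\<close>

definition strong_lim :: "(nat \<Rightarrow> 'a \<Rightarrow> 'b::t2_space) \<Rightarrow> 'a \<Rightarrow> 'b" where
  "strong_lim P = (\<lambda>x. lim (\<lambda>n. P n x))"

context
  fixes P :: "nat \<Rightarrow> 'a::chilbert_space \<Rightarrow> 'a"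
  assumes proj: "\<And>n. is_projection (P n)"
    and mono: "\<And>n x. norm (P n x) \<le> norm (P (Suc n) x)"
begin

lemma incseq_projections_norm_mono: "n \<le> m \<Longrightarrow> norm (P n x) \<le> norm (P m x)"
  using lift_Suc_mono_le[of "\<lambda>n. norm (P n x)"] mono by blast

lemma incseq_projections_tendsto: "(\<lambda>n. P n x) \<longlonglongrightarrow> strong_lim P x"
proof -
  \<comment> \<open>\<open>norm (P m x - P n x)\<^sup>2 = norm (P m x)\<^sup>2 - norm (P n x)\<^sup>2\<close> for
    \<open>n \<le> m\<close>, and the squared norms increase boundedly\<close>
  define a where "a n = (norm (P n x))^2" for n
  have "incseq a"
    unfolding incseq_def a_def by (simp add: incseq_projections_norm_mono)
  moreover have "a n \<le> (norm x)^2" for n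
    unfolding a_def by (simp add: projection_norm_le[OF proj])
  ultimately obtain L where L: "a \<longlonglongrightarrow> L" using incseq_convergent by blast
  have "Cauchy (\<lambda>n. P n x)"
    unfolding Cauchy_altdef2
  proof (intro allI impI)
    fix e :: real
    assume "e > 0"
    then obtain N where N: "\<And>n. n \<ge> N \<Longrightarrow> dist (a n) L < e^2"
      using L unfolding lim_sequentially by (meson zero_less_power)
    have "dist (P n x) (P N x) < e" if "n \<ge> N" for n
    proof -
      have "(norm (P n x - P N x))^2 = a n - a N"
        unfolding a_def
        by (rule projection_le_norm_diff[OF proj proj incseq_projections_norm_mono[OF that]])
      also have "\<dots> \<le> L - a N"
        using incseq_le[OF \<open>incseq a\<close> L] by simp
      also have "\<dots> < e^2" using N[of N] incseq_le[OF \<open>incseq a\<close> L, of N] by (simp add: dist_real_def)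
      finally show ?thesis using \<open>e > 0\<close> by (simp add: dist_norm power_less_imp_less_base)
    qed
    then show "\<exists>N. \<forall>n\<ge>N. dist (P n x) (P N x) < e" by blast
  qed
  then have "convergent (\<lambda>n. P n x)" by (rule Cauchy_convergent)
  then show ?thesis unfolding strong_lim_def by (simp add: convergent_LIMSEQ_iff)
qed

lemma norm_le_strong_lim: "norm (P n x) \<le> norm (strong_lim P x)"
  by (rule LIMSEQ_le_const[OF tendsto_norm[OF incseq_projections_tendsto]])
    (intro exI[of _ n] allI impI incseq_projections_norm_mono)

lemma bounded_op_strong_lim: "bounded_op (strong_lim P)"
proof -
  let ?Q = "strong_lim P"
  note lim = incseq_projections_tendsto
  have bP: "bounded_op (P n)" for n using proj projection_bounded by blast
  have "?Q (x + y) = ?Q x + ?Q y" for x y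
  proof -
    have "(\<lambda>n. P n (x + y)) \<longlonglongrightarrow> ?Q x + ?Q y"
      using tendsto_add[OF lim[of x] lim[of y]] by (simp add: bounded_opD[OF bP])
    then show ?thesis using lim[of "x + y"] LIMSEQ_unique by blast
  qed
  moreover have "?Q (scaleC c x) = scaleC c (?Q x)" for c x
  proof -
    have "(\<lambda>n. P n (scaleC c x)) \<longlonglongrightarrow> scaleC c (?Q x)"
      using bounded_op_tendsto[OF bounded_op_scale[OF bounded_op_id] lim[of x], of c]
      by (simp add: op_scale_def bounded_opD[OF bP])
    then show ?thesis using lim[of "scaleC c x"] LIMSEQ_unique by blast
  qed
  moreover have "norm (?Q x) \<le> 1 * norm x" for x
    using LIMSEQ_le_const2[OF tendsto_norm[OF lim]] projection_norm_le[OF proj] by simp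
  ultimately show ?thesis
    unfolding bounded_op_def clinear_op_def by (intro conjI allI exI[of _ 1]) auto
qed

lemma projection_strong_lim_absorb: "P n (strong_lim P x) = P n x"
proof -
  have bP: "bounded_op (P n)" using proj projection_bounded by blast
  have "P n (P m x) = P n x" if "n \<le> m" for m
    using projection_le_absorb_right[OF proj proj] incseq_projections_norm_mono[OF that] by blast
  then have "eventually (\<lambda>m. P n (P m x) = P n x) sequentially"
    unfolding eventually_sequentially by blast
  then have "(\<lambda>m. P n x) \<longlonglongrightarrow> P n (strong_lim P x)"
    by (rule Lim_transform_eventually[OF bounded_op_tendsto[OF bP incseq_projections_tendsto]])
  from LIMSEQ_unique[OF tendsto_const this] show ?thesis by simp
qed

lemma is_projection_strong_lim: "is_projection (strong_lim P)"
proof -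
  let ?Q = "strong_lim P"
  note lim = incseq_projections_tendsto
  have "cinner (?Q x) y = cinner x (?Q y)" for x y
  proof -
    have "(\<lambda>n. cinner (P n x) y) \<longlonglongrightarrow> cinner (?Q x) y" by (intro tendsto_intros lim)
    moreover have "(\<lambda>n. cinner (P n x) y) \<longlonglongrightarrow> cinner x (?Q y)"
      using tendsto_cinner[OF tendsto_const lim[of y], of x] projection_selfadjoint[OF proj] by simp
    ultimately show ?thesis using LIMSEQ_unique by blast
  qed
  then have "adj ?Q = ?Q" by (rule adj_eqI)
  moreover have "?Q (?Q x) = ?Q x" for x
  proof -
    have "(\<lambda>n. P n x) \<longlonglongrightarrow> ?Q (?Q x)" using lim[of "?Q x"] by (simp add: projection_strong_lim_absorb)
    then show ?thesis using lim[of x] LIMSEQ_unique by blast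
  qed
  ultimately show ?thesis
    unfolding is_projection_def using bounded_op_strong_lim by (simp add: fun_eq_iff)
qed

lemma strong_lim_commute:
  assumes T: "bounded_op T" and comm: "\<And>n. T \<circ> P n = P n \<circ> T"
  shows "T \<circ> strong_lim P = strong_lim P \<circ> T"
proof
  fix x
  have "(\<lambda>n. T (P n x)) = (\<lambda>n. P n (T x))"
    using comm by (simp add: fun_eq_iff)
  then have "(\<lambda>n. P n (T x)) \<longlonglongrightarrow> T (strong_lim P x)"
    using bounded_op_tendsto[OF T incseq_projections_tendsto[of x]] by simp
  then show "(T \<circ> strong_lim P) x = (strong_lim P \<circ> T) x"
    using incseq_projections_tendsto[of "T x"] LIMSEQ_unique by fastforce
qed

end

section \<open>Commutants, von Neumann algebras and masas\<close>

lemma mem_commutant_iff: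
  "T \<in> commutant S \<longleftrightarrow> bounded_op T \<and> (\<forall>A\<in>S. \<forall>x. T (A x) = A (T x))"
  unfolding commutant_def by (auto simp: fun_eq_iff)

lemma commutant_antimono: "S \<subseteq> T \<Longrightarrow> commutant T \<subseteq> commutant S"
  unfolding commutant_def by blast

lemma subset_double_commutant: "(\<And>T. T \<in> S \<Longrightarrow> bounded_op T) \<Longrightarrow> S \<subseteq> commutant (commutant S)"
  unfolding commutant_def by auto

lemma adj_mem_commutant:
  fixes S :: "('a::chilbert_space \<Rightarrow> 'a) set"
  assumes S: "\<And>A. A \<in> S \<Longrightarrow> bounded_op A \<and> adj A \<in> S" and T: "T \<in> commutant S"
  shows "adj T \<in> commutant S"
proof -
  have bT: "bounded_op T" using T unfolding commutant_def by blast
  have "adj T \<circ> A = A \<circ> adj T" if A: "A \<in> S" for A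
  proof -
    have bA: "bounded_op A" and baA: "bounded_op (adj A)" using S[OF A] bounded_op_adj by auto
    have "T \<circ> adj A = adj A \<circ> T" using T S[OF A] unfolding commutant_def by blast
    then have "adj (adj A \<circ> T) = adj (T \<circ> adj A)" by simp
    then show ?thesis by (simp add: adj_comp[OF baA bT] adj_comp[OF bT baA] adj_adj[OF bA])
  qed
  then show ?thesis unfolding commutant_def using bounded_op_adj[OF bT] by blast
qed

lemma star_subalgebra_commutant:
  fixes S :: "('a::chilbert_space \<Rightarrow> 'a) set"
  assumes S: "\<And>A. A \<in> S \<Longrightarrow> bounded_op A \<and> adj A \<in> S"
  shows "star_subalgebra (commutant S)"
proof -
  have bS: "bounded_op A" if "A \<in> S" for A using S that by blast
  show ?thesis
    unfolding star_subalgebra_def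
  proof (intro conjI ballI allI)
    fix T1 T2 assume "T1 \<in> commutant S" "T2 \<in> commutant S"
    then show "op_add T1 T2 \<in> commutant S" "T1 \<circ> T2 \<in> commutant S"
      by (auto simp: mem_commutant_iff op_add_def bounded_op_add bounded_op_comp bounded_opD[OF bS])
  next
    fix c T assume "T \<in> commutant S"
    then show "op_scale c T \<in> commutant S"
      by (auto simp: mem_commutant_iff op_scale_def bounded_op_scale[unfolded op_scale_def]
          bounded_opD[OF bS])
  next
    fix T assume "T \<in> commutant S"
    then show "bounded_op T" by (simp add: mem_commutant_iff)
    from \<open>T \<in> commutant S\<close> show "adj T \<in> commutant S" using adj_mem_commutant S by blast
  qed
qed

definition strong_lim_closed :: "('a::chilbert_space \<Rightarrow> 'a) set \<Rightarrow> bool" where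
  "strong_lim_closed S \<longleftrightarrow> (\<forall>P. (\<forall>n. P n \<in> S \<and> is_projection (P n)) \<and>
      (\<forall>n x. norm (P n x) \<le> norm (P (Suc n) x)) \<longrightarrow> strong_lim P \<in> S)"

lemma strong_lim_mem_double_commutant:
  fixes P :: "nat \<Rightarrow> 'a::chilbert_space \<Rightarrow> 'a"
  assumes P: "\<And>n. P n \<in> S" "\<And>n. is_projection (P n)"
    and mono: "\<And>n x. norm (P n x) \<le> norm (P (Suc n) x)"
  shows "strong_lim P \<in> commutant (commutant S)"
proof -
  have "T \<circ> strong_lim P = strong_lim P \<circ> T" if "T \<in> commutant S" for T
    using that P(1) by (intro strong_lim_commute[of P, OF P(2) mono]) (auto simp: commutant_def)
  then show ?thesis
    using projection_bounded[OF is_projection_strong_lim[of P, OF P(2) mono]]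
    unfolding commutant_def[of "commutant S"] by auto
qed

lemma von_neumann_algebra_strong_lim_closed: "von_neumann_algebra M \<Longrightarrow> strong_lim_closed M"
  unfolding strong_lim_closed_def von_neumann_algebra_def
  by (metis strong_lim_mem_double_commutant)

lemma double_commutant_abelian:
  fixes M C :: "('a::chilbert_space \<Rightarrow> 'a) set"
  assumes vna: "von_neumann_algebra M" and CM: "C \<subseteq> M"
    and C: "\<And>A. A \<in> C \<Longrightarrow> bounded_op A \<and> adj A \<in> C"
    and comm: "\<And>A B. A \<in> C \<Longrightarrow> B \<in> C \<Longrightarrow> A \<circ> B = B \<circ> A"
  shows "abelian_star_subalgebra_of M (commutant (commutant C))"
proof -
  have CC: "C \<subseteq> commutant C" unfolding commutant_def using C comm by auto
  have "bounded_op T \<and> adj T \<in> commutant C" if "T \<in> commutant C" for T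
    using that adj_mem_commutant[OF C that] by (simp add: mem_commutant_iff)
  then have "star_subalgebra (commutant (commutant C))"
    by (rule star_subalgebra_commutant)
  moreover have "commutant (commutant C) \<subseteq> commutant C"
    by (rule commutant_antimono[OF CC])
  then have "S \<circ> T = T \<circ> S" if "S \<in> commutant (commutant C)" "T \<in> commutant (commutant C)" for S T
    using that unfolding commutant_def[of "commutant C"] by blast
  moreover have "commutant (commutant C) \<subseteq> M"
    using commutant_antimono[OF commutant_antimono[OF CM]] vna unfolding von_neumann_algebra_def by simp
  ultimately show ?thesis unfolding abelian_star_subalgebra_of_def by blast
qed

lemma masa_strong_lim_closed:
  fixes M A :: "('a::chilbert_space \<Rightarrow> 'a) set"
  assumes vna: "von_neumann_algebra M" and masa: "masa M A"
  shows "strong_lim_closed A"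
  unfolding strong_lim_closed_def
proof (intro allI impI)
  fix P :: "nat \<Rightarrow> 'a \<Rightarrow> 'a"
  assume "(\<forall>n. P n \<in> A \<and> is_projection (P n)) \<and> (\<forall>n x. norm (P n x) \<le> norm (P (Suc n) x))"
  then have PA: "\<And>n. P n \<in> A" and proj: "\<And>n. is_projection (P n)"
    and mono: "\<And>n x. norm (P n x) \<le> norm (P (Suc n) x)" by auto
  let ?Q = "strong_lim P"
  have AM: "A \<subseteq> M" and sA: "star_subalgebra A" and comA: "\<And>S T. S \<in> A \<Longrightarrow> T \<in> A \<Longrightarrow> S \<circ> T = T \<circ> S"
    using masa unfolding masa_def abelian_star_subalgebra_of_def by auto
  have bA: "\<And>T. T \<in> A \<Longrightarrow> bounded_op T \<and> adj T \<in> A"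
    using sA unfolding star_subalgebra_def by auto
  have Qp: "is_projection ?Q" by (rule is_projection_strong_lim[of P, OF proj mono])
  have "?Q \<in> M"
    using von_neumann_algebra_strong_lim_closed[OF vna] PA AM proj mono
    unfolding strong_lim_closed_def by blast
  moreover have QA: "S \<circ> ?Q = ?Q \<circ> S" if "S \<in> A" for S
    using that bA comA PA by (intro strong_lim_commute[of P, OF proj mono]) auto
  \<comment> \<open>adjoining \<open>?Q\<close> to \<open>A\<close> keeps it commutative, so by maximality \<open>?Q\<close>
    was already in \<open>A\<close>\<close>
  ultimately have "abelian_star_subalgebra_of M (commutant (commutant (insert ?Q A)))"
    using AM bA Qp comA unfolding is_projection_def
    by (intro double_commutant_abelian[OF vna]) (auto simp: QA[symmetric])
  moreover have "insert ?Q A \<subseteq> commutant (commutant (insert ?Q A))"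
    using bA Qp by (intro subset_double_commutant) (auto simp: is_projection_def)
  ultimately show "?Q \<in> A" using masa unfolding masa_def by blast
qed

section \<open>The common refinement of a compatible sequence\<close>

lemma continuous_at_right_iff:
  fixes f :: "real \<Rightarrow> 'b::metric_space"
  shows "continuous (at l within {l..u}) f \<longleftrightarrow>
    (\<forall>e>0. \<exists>d>0. \<forall>m\<in>{l..u}. m < l + d \<longrightarrow> dist (f m) (f l) < e)"
proof -
  have "(\<forall>m\<in>{l..u}. dist m l < d \<longrightarrow> P m) \<longleftrightarrow> (\<forall>m\<in>{l..u}. m < l + d \<longrightarrow> P m)" for d P
    by (auto simp: dist_real_def)
  then show ?thesis unfolding continuous_within_eps_delta by simp
qed

primrec iterate_from :: "(nat \<Rightarrow> 'a \<Rightarrow> 'a) \<Rightarrow> nat \<Rightarrow> nat \<Rightarrow> 'a \<Rightarrow> 'a" where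
  "iterate_from g n 0 l = l"
| "iterate_from g n (Suc j) l = g (n + j) (iterate_from g n j l)"

lemma iterate_from_shift: "iterate_from g (Suc n) j (g n l) = iterate_from g n (Suc j) l"
  by (induction j) simp_all

text \<open>Indices start at 0 here: \<open>D n\<close>, \<open>c n\<close>, \<open>\<alpha> n\<close> and \<open>g n\<close> stand for the paper's
  E^(n+1), the right end point of I_(n+1), alpha_(n+1) and f_(n+1).\<close>

locale refinement_tower =
  fixes M S :: "('a::chilbert_space \<Rightarrow> 'a) set" and a B :: real and c \<alpha> :: "nat \<Rightarrow> real"
    and D :: "nat \<Rightarrow> real \<Rightarrow> 'a \<Rightarrow> 'a" and g :: "nat \<Rightarrow> real \<Rightarrow> real"
  assumes alpha_nonneg: "\<And>n. \<alpha> n \<ge> 0"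
    and summable_alpha: "summable \<alpha>"
    and c_tendsto: "c \<longlonglongrightarrow> B"
    and brsr_D: "\<And>n. \<exists>p. brsr M a (c n) p (D n)"
    and refinement_g: "\<And>n. strong_refinement a (c (Suc n)) (D (Suc n)) (g n) a (c n) (D n)"
    and g_close: "\<And>n l. l \<in> {a..c n} \<Longrightarrow> g n l - l \<le> \<alpha> n"
    and D_mem: "\<And>n l. l \<in> {a..c n} \<Longrightarrow> D n l \<in> S"
    and S_subset: "S \<subseteq> M"
    and S_closed: "strong_lim_closed S"
begin

lemma a_le_c: "a \<le> c n"
  using brsr_D[of n] unfolding brsr_def by auto

lemma g_in: "l \<in> {a..c n} \<Longrightarrow> g n l \<in> {a..c (Suc n)}"
  using refinement_g[of n] unfolding strong_refinement_def by blast

lemma g_cont: "l \<in> {a..c n} \<Longrightarrow> continuous (at l within {l..c n}) (g n)"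
  using refinement_g[of n] unfolding strong_refinement_def continuous_within by blast

lemma g_end: "g n (c n) = c (Suc n)"
  using refinement_g[of n] unfolding strong_refinement_def by blast

lemma D_g: "l \<in> {a..c n} \<Longrightarrow> D (Suc n) (g n l) = D n l"
  using refinement_g[of n] unfolding strong_refinement_def by auto

lemma g_ge: "l \<in> {a..c n} \<Longrightarrow> l \<le> g n l"
  using refinement_g[of n] unfolding strong_refinement_def by auto

lemma g_slope: "l \<in> {a..c n} \<Longrightarrow> m \<in> {a..c n} \<Longrightarrow> m < l \<Longrightarrow> l - m \<le> g n l - g n m"
  using refinement_g[of n] unfolding strong_refinement_def by auto

lemma c_le: "c n \<le> B"
proof -
  have "incseq c"
    using g_ge[of "c n" n for n] a_le_c g_end by (intro incseq_SucI) simp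
  then show ?thesis using incseq_le c_tendsto by blast
qed

abbreviation "G \<equiv> iterate_from g"

lemma G_in: "l \<in> {a..c n} \<Longrightarrow> G n j l \<in> {a..c (n + j)}"
proof (induction j)
  case (Suc j)
  then show ?case using g_in[OF Suc.IH[OF Suc.prems]] by simp
qed simp

lemma G_le_Suc: "l \<in> {a..c n} \<Longrightarrow> G n j l \<le> G n (Suc j) l"
  using g_ge[OF G_in, of l n j] by simp

lemma G_Suc_le: "l \<in> {a..c n} \<Longrightarrow> G n (Suc j) l \<le> G n j l + \<alpha> (n + j)"
  using g_close[OF G_in, of l n j] by simp

lemma D_G: "l \<in> {a..c n} \<Longrightarrow> D (n + j) (G n j l) = D n l"
  by (induction j) (simp_all add: D_g[OF G_in])

lemma G_end: "G n j (c n) = c (n + j)"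
  by (induction j) (simp_all add: g_end)

lemma G_slope: "l \<in> {a..c n} \<Longrightarrow> m \<in> {a..c n} \<Longrightarrow> m < l \<Longrightarrow> l - m \<le> G n j l - G n j m"
proof (induction j)
  case (Suc j)
  then have "G n j m < G n j l" by linarith
  then show ?case
    using Suc g_slope[OF G_in[OF Suc.prems(1)] G_in[OF Suc.prems(2)]] by fastforce
qed simp

lemma G_mono: "l \<in> {a..c n} \<Longrightarrow> m \<in> {a..c n} \<Longrightarrow> m \<le> l \<Longrightarrow> G n j m \<le> G n j l"
  using G_slope[of l n m j] by (cases "m = l") auto

lemma G_cont: "l \<in> {a..c n} \<Longrightarrow> continuous (at l within {l..c n}) (G n j)"
proof (induction j)
  case 0
  show ?case by simp
next
  case (Suc j)
  have "G n j ` {l..c n} \<subseteq> {G n j l..c (n + j)}"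
    using G_mono[OF _ Suc.prems] G_in Suc.prems by fastforce
  then have "continuous (at (G n j l) within G n j ` {l..c n}) (g (n + j))"
    using g_cont[OF G_in[OF Suc.prems]] continuous_within_subset by blast
  then show ?case
    using continuous_within_compose2[OF Suc.IH[OF Suc.prems]] by simp
qed

definition tail :: "nat \<Rightarrow> real" where "tail m = (\<Sum>i. \<alpha> (i + m))"

lemma tail_nonneg: "tail m \<ge> 0"
  unfolding tail_def by (rule suminf_nonneg) (simp_all add: summable_alpha alpha_nonneg)

lemma tail_small: "e > 0 \<Longrightarrow> \<exists>N. \<forall>m\<ge>N. tail m < e"
  using suminf_exist_split[OF _ summable_alpha, of e] tail_nonneg unfolding tail_def
  by (metis abs_of_nonneg real_norm_def)

lemma G_incr: "l \<in> {a..c n} \<Longrightarrow> j \<le> k \<Longrightarrow> G n j l \<le> G n k l"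
  using lift_Suc_mono_le[of "\<lambda>j. G n j l"] G_le_Suc by blast

lemma G_diff_le_tail: "l \<in> {a..c n} \<Longrightarrow> j \<le> k \<Longrightarrow> G n k l - G n j l \<le> tail (n + j)"
proof -
  assume l: "l \<in> {a..c n}" and "j \<le> k"
  then obtain d where k: "k = j + d" using le_Suc_ex by blast
  have "G n (j + d) l - G n j l \<le> (\<Sum>i<d. \<alpha> (i + (n + j)))"
  proof (induction d)
    case (Suc d)
    have "G n (Suc (j + d)) l \<le> G n (j + d) l + \<alpha> (n + (j + d))" by (rule G_Suc_le[OF l])
    then show ?case using Suc by (simp add: add_ac)
  qed simp
  also have "\<dots> \<le> tail (n + j)" unfolding tail_def
    by (rule sum_le_suminf) (simp_all add: summable_alpha alpha_nonneg)
  finally show ?thesis using k by simp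
qed

definition F :: "nat \<Rightarrow> real \<Rightarrow> real" where "F n l = lim (\<lambda>j. G n j l)"

lemma G_le_B: "l \<in> {a..c n} \<Longrightarrow> G n j l \<le> B"
  using G_in c_le by (meson atLeastAtMost_iff order_trans)

lemma G_tendsto_F: "l \<in> {a..c n} \<Longrightarrow> (\<lambda>j. G n j l) \<longlonglongrightarrow> F n l"
proof -
  assume l: "l \<in> {a..c n}"
  have "incseq (\<lambda>j. G n j l)" unfolding incseq_def using G_incr[OF l] by blast
  then obtain L where "(\<lambda>j. G n j l) \<longlonglongrightarrow> L" using incseq_convergent G_le_B[OF l] by blast
  then show ?thesis unfolding F_def by (metis limI)
qed

lemma F_bounds: "l \<in> {a..c n} \<Longrightarrow> G n j l \<le> F n l \<and> F n l \<le> G n j l + tail (n + j)"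
proof
  assume l: "l \<in> {a..c n}"
  show "G n j l \<le> F n l"
    by (rule LIMSEQ_le_const[OF G_tendsto_F[OF l]]) (use G_incr[OF l] in blast)
  show "F n l \<le> G n j l + tail (n + j)"
    by (rule LIMSEQ_le_const2[OF G_tendsto_F[OF l]])
      (use G_diff_le_tail[OF l] in \<open>auto simp: algebra_simps\<close>)
qed

lemma F_ge: "l \<in> {a..c n} \<Longrightarrow> l \<le> F n l"
  using F_bounds[of l n 0] by simp

lemma F_le_B: "l \<in> {a..c n} \<Longrightarrow> F n l \<le> B"
  using LIMSEQ_le_const2[OF G_tendsto_F] G_le_B by blast

lemma F_slope: "l \<in> {a..c n} \<Longrightarrow> m \<in> {a..c n} \<Longrightarrow> m < l \<Longrightarrow> l - m \<le> F n l - F n m"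
  using LIMSEQ_le_const[OF tendsto_diff[OF G_tendsto_F G_tendsto_F]] G_slope by blast

lemma F_mono: "l \<in> {a..c n} \<Longrightarrow> m \<in> {a..c n} \<Longrightarrow> m \<le> l \<Longrightarrow> F n m \<le> F n l"
  using F_slope[of l n m] by (cases "m = l") auto

lemma F_strict_mono: "l \<in> {a..c n} \<Longrightarrow> m \<in> {a..c n} \<Longrightarrow> m < l \<Longrightarrow> F n m < F n l"
  using F_slope[of l n m] by auto

lemma F_end: "F n (c n) = B"
proof -
  have "(\<lambda>j. G n j (c n)) \<longlonglongrightarrow> B"
    using LIMSEQ_ignore_initial_segment[OF c_tendsto, of n] by (simp add: G_end add.commute)
  then show ?thesis using G_tendsto_F[of "c n" n] a_le_c LIMSEQ_unique by auto
qed

lemma F_g: "l \<in> {a..c n} \<Longrightarrow> F (Suc n) (g n l) = F n l"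
proof -
  assume l: "l \<in> {a..c n}"
  have "(\<lambda>j. G n (Suc j) l) \<longlonglongrightarrow> F (Suc n) (g n l)"
    using G_tendsto_F[OF g_in[OF l]] by (simp add: iterate_from_shift)
  then have "(\<lambda>j. G n j l) \<longlonglongrightarrow> F (Suc n) (g n l)" by (rule LIMSEQ_imp_Suc)
  then show ?thesis using G_tendsto_F[OF l] LIMSEQ_unique by blast
qed

lemma F_G: "l \<in> {a..c n} \<Longrightarrow> F (n + j) (G n j l) = F n l"
  by (induction j) (simp_all add: F_g[OF G_in])

lemma F_cont: "l \<in> {a..c n} \<Longrightarrow> continuous (at l within {l..c n}) (F n)"
  unfolding continuous_at_right_iff
proof (intro allI impI)
  fix e :: real
  assume l: "l \<in> {a..c n}" and e: "e > 0"
  \<comment> \<open>\<open>F n\<close> is a uniform limit of the continuous maps \<open>G n j\<close>\<close>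
  obtain N where N: "\<And>m. m \<ge> N \<Longrightarrow> tail m < e / 2" using tail_small[of "e/2"] e by auto
  obtain d where d: "d > 0" "\<And>m. m \<in> {l..c n} \<Longrightarrow> m < l + d \<Longrightarrow> dist (G n N m) (G n N l) < e / 2"
    using G_cont[OF l, of N] e unfolding continuous_at_right_iff by (meson half_gt_zero)
  show "\<exists>d>0. \<forall>m\<in>{l..c n}. m < l + d \<longrightarrow> dist (F n m) (F n l) < e"
  proof (intro exI[of _ d] conjI ballI impI)
    fix m assume m: "m \<in> {l..c n}" "m < l + d"
    then have m': "m \<in> {a..c n}" using l by auto
    have "F n m \<le> G n N m + tail (n + N)" "G n N l \<le> F n l" "F n l \<le> F n m"
      using F_bounds[OF m'] F_bounds[OF l] F_mono[OF m' l] m by auto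
    moreover have "G n N m - G n N l < e / 2"
      using d(2)[OF m] unfolding dist_real_def by linarith
    ultimately show "dist (F n m) (F n l) < e"
      using N[of "n + N"] by (simp add: dist_real_def)
  qed (rule d(1))
qed

lemma D_proj: "l \<in> {a..c n} \<Longrightarrow> is_projection (D n l)"
  using brsr_D[of n] unfolding brsr_def projections_def by blast

lemma D_norm_antimono:
  "l \<in> {a..c n} \<Longrightarrow> m \<in> {a..c n} \<Longrightarrow> l \<le> m \<Longrightarrow> norm (D n m x) \<le> norm (D n l x)"
  using brsr_D[of n] op_le_projection_iff[OF D_proj D_proj] unfolding brsr_def by blast

lemma D_cont: "l \<in> {a..c n} \<Longrightarrow> continuous (at l within {l..c n}) (\<lambda>m. D n m x)"
  using brsr_D[of n] unfolding brsr_def continuous_within by blast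

definition F_inv :: "nat \<Rightarrow> real \<Rightarrow> real" where
  "F_inv n \<mu> = Inf {l \<in> {a..c n}. \<mu> \<le> F n l}"

lemma F_inv_le: "l \<in> {a..c n} \<Longrightarrow> \<mu> \<le> F n l \<Longrightarrow> F_inv n \<mu> \<le> l"
  unfolding F_inv_def by (rule cInf_lower) (auto intro: bdd_belowI[of _ a])

lemma F_inv_in: "\<mu> \<le> B \<Longrightarrow> F_inv n \<mu> \<in> {a..c n}"
proof -
  assume "\<mu> \<le> B"
  then have c_mem: "c n \<in> {l \<in> {a..c n}. \<mu> \<le> F n l}" using F_end a_le_c by simp
  then have "F_inv n \<mu> \<le> c n" using F_inv_le by blast
  moreover have "a \<le> F_inv n \<mu>" unfolding F_inv_def by (rule cInf_greatest) (use c_mem in auto)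
  ultimately show ?thesis by simp
qed

lemma le_F_F_inv: "\<mu> \<le> B \<Longrightarrow> \<mu> \<le> F n (F_inv n \<mu>)"
proof (rule ccontr)
  assume \<mu>: "\<mu> \<le> B" and "\<not> \<mu> \<le> F n (F_inv n \<mu>)"
  define t where "t = F_inv n \<mu>"
  have t: "t \<in> {a..c n}" unfolding t_def by (rule F_inv_in[OF \<mu>])
  have lt: "F n t < \<mu>" using \<open>\<not> \<mu> \<le> F n (F_inv n \<mu>)\<close> unfolding t_def by simp
  \<comment> \<open>by right continuity \<open>F n < \<mu>\<close> on some \<open>[t, t + d)\<close>, contradicting the
    choice of \<open>t\<close> as an infimum\<close>
  obtain d where d: "d > 0" "\<And>m. m \<in> {t..c n} \<Longrightarrow> m < t + d \<Longrightarrow> dist (F n m) (F n t) < \<mu> - F n t"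
    using F_cont[OF t] lt unfolding continuous_at_right_iff by (meson diff_gt_0_iff_gt)
  have "\<exists>m\<in>{l \<in> {a..c n}. \<mu> \<le> F n l}. m < t + d"
    using d(1) F_end a_le_c \<mu> unfolding t_def F_inv_def
    by (subst cInf_less_iff[symmetric]) (auto intro: bdd_belowI[of _ a])
  then obtain m where m: "m \<in> {a..c n}" "\<mu> \<le> F n m" "m < t + d" by blast
  have "t \<le> m" unfolding t_def using F_inv_le[OF m(1,2)] .
  then have "dist (F n m) (F n t) < \<mu> - F n t" using d(2) m by simp
  then show False using m(2) by (simp add: dist_real_def)
qed

lemma F_inv_mono: "\<mu> \<le> \<nu> \<Longrightarrow> \<nu> \<le> B \<Longrightarrow> F_inv n \<mu> \<le> F_inv n \<nu>"
  by (rule F_inv_le[OF F_inv_in]) (auto intro: order_trans[OF _ le_F_F_inv])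

lemma F_inv_F: "l \<in> {a..c n} \<Longrightarrow> F_inv n (F n l) = l"
proof -
  assume l: "l \<in> {a..c n}"
  have "F_inv n (F n l) \<le> l" by (rule F_inv_le[OF l]) simp
  moreover have "F n l \<le> F n (F_inv n (F n l))" by (rule le_F_F_inv[OF F_le_B[OF l]])
  ultimately show ?thesis using F_strict_mono[OF l F_inv_in[OF F_le_B[OF l]]] by force
qed

lemma F_inv_Suc_le: "\<mu> \<le> B \<Longrightarrow> F_inv (Suc n) \<mu> \<le> g n (F_inv n \<mu>)"
  using F_inv_le[OF g_in[OF F_inv_in]] F_g[OF F_inv_in] le_F_F_inv by simp

lemma F_inv_cont: "\<mu> \<le> B \<Longrightarrow> continuous (at \<mu> within {\<mu>..B}) (F_inv n)"
  unfolding continuous_at_right_iff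
proof (intro allI impI)
  fix e :: real
  assume \<mu>: "\<mu> \<le> B" and e: "e > 0"
  have t: "F_inv n \<mu> \<in> {a..c n}" by (rule F_inv_in[OF \<mu>])
  have F_inv_near: "dist (F_inv n \<nu>) (F_inv n \<mu>) < e" if "\<nu> \<in> {\<mu>..B}" "F_inv n \<nu> < F_inv n \<mu> + e" for \<nu>
    using that F_inv_mono[of \<mu> \<nu> n] by (simp add: dist_real_def)
  show "\<exists>d>0. \<forall>\<nu>\<in>{\<mu>..B}. \<nu> < \<mu> + d \<longrightarrow> dist (F_inv n \<nu>) (F_inv n \<mu>) < e"
  proof (cases "F_inv n \<mu> + e / 2 \<le> c n")
    case True
    define l where "l = F_inv n \<mu> + e / 2"
    have l: "l \<in> {a..c n}" using True t e by (simp add: l_def)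
    have "F n (F_inv n \<mu>) < F n l" by (rule F_strict_mono[OF l t]) (use e in \<open>simp add: l_def\<close>)
    then have "F n l - \<mu> > 0" using le_F_F_inv[OF \<mu>, of n] by linarith
    moreover have "F_inv n \<nu> < F_inv n \<mu> + e" if "\<nu> < \<mu> + (F n l - \<mu>)" for \<nu>
      using F_inv_le[OF l, of \<nu>] that e by (simp add: l_def)
    ultimately show ?thesis using F_inv_near by blast
  next
    case False
    then have "F_inv n \<nu> < F_inv n \<mu> + e" if "\<nu> \<in> {\<mu>..B}" for \<nu>
      using F_inv_in[of \<nu> n] that e by auto
    then show ?thesis using F_inv_near by (meson zero_less_one)
  qed
qed

definition approx :: "nat \<Rightarrow> real \<Rightarrow> 'a \<Rightarrow> 'a" where "approx n \<mu> = D n (F_inv n \<mu>)"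

lemma approx_proj: "\<mu> \<le> B \<Longrightarrow> is_projection (approx n \<mu>)"
  unfolding approx_def by (rule D_proj[OF F_inv_in])

lemma approx_norm_mono: "\<mu> \<le> B \<Longrightarrow> norm (approx n \<mu> x) \<le> norm (approx (Suc n) \<mu> x)"
  using D_norm_antimono[OF F_inv_in g_in[OF F_inv_in] F_inv_Suc_le] D_g[OF F_inv_in]
  unfolding approx_def by metis

lemma approx_norm_antimono: "\<mu> \<le> \<nu> \<Longrightarrow> \<nu> \<le> B \<Longrightarrow> norm (approx n \<nu> x) \<le> norm (approx n \<mu> x)"
  unfolding approx_def by (rule D_norm_antimono[OF F_inv_in F_inv_in F_inv_mono]) simp_all

lemma approx_cont: "\<mu> \<le> B \<Longrightarrow> continuous (at \<mu> within {\<mu>..B}) (\<lambda>\<nu>. approx n \<nu> x)"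
proof -
  assume \<mu>: "\<mu> \<le> B"
  have "F_inv n ` {\<mu>..B} \<subseteq> {F_inv n \<mu>..c n}"
    using F_inv_mono F_inv_in by fastforce
  then have "continuous (at (F_inv n \<mu>) within F_inv n ` {\<mu>..B}) (\<lambda>m. D n m x)"
    using D_cont[OF F_inv_in[OF \<mu>]] continuous_within_subset by blast
  then show ?thesis
    unfolding approx_def using continuous_within_compose2[OF F_inv_cont[OF \<mu>]] by blast
qed

definition E :: "real \<Rightarrow> 'a \<Rightarrow> 'a" where "E \<mu> = strong_lim (\<lambda>n. approx n \<mu>)"

context
  fixes \<mu>
  assumes \<mu>: "\<mu> \<le> B"
begin

lemma approx_tendsto_E: "(\<lambda>n. approx n \<mu> x) \<longlonglongrightarrow> E \<mu> x"
  unfolding E_def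
  by (rule incseq_projections_tendsto[of "\<lambda>n. approx n \<mu>", OF approx_proj[OF \<mu>] approx_norm_mono[OF \<mu>]])

lemma E_proj: "is_projection (E \<mu>)"
  unfolding E_def
  by (rule is_projection_strong_lim[of "\<lambda>n. approx n \<mu>", OF approx_proj[OF \<mu>] approx_norm_mono[OF \<mu>]])

lemma norm_approx_le_E: "norm (approx n \<mu> x) \<le> norm (E \<mu> x)"
  unfolding E_def
  by (rule norm_le_strong_lim[of "\<lambda>n. approx n \<mu>", OF approx_proj[OF \<mu>] approx_norm_mono[OF \<mu>]])

end

lemma E_mem: "\<mu> \<le> B \<Longrightarrow> E \<mu> \<in> S"
  using S_closed approx_proj approx_norm_mono D_mem[OF F_inv_in]
  unfolding strong_lim_closed_def E_def approx_def by simp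

lemma E_norm_antimono: "\<mu> \<le> \<nu> \<Longrightarrow> \<nu> \<le> B \<Longrightarrow> norm (E \<nu> x) \<le> norm (E \<mu> x)"
  by (rule LIMSEQ_le[OF tendsto_norm[OF approx_tendsto_E] tendsto_norm[OF approx_tendsto_E]])
    (use approx_norm_antimono in auto)

lemma E_B: "E B = (\<lambda>x. 0)"
proof -
  have "F_inv n B = c n" for n using F_inv_F[of "c n" n] F_end a_le_c by simp
  then have "approx n B = (\<lambda>x. 0)" for n
    using brsr_D[of n] unfolding approx_def brsr_def by auto
  then show ?thesis unfolding E_def strong_lim_def by simp
qed

lemma E_F: "l \<in> {a..c n} \<Longrightarrow> E (F n l) = D n l"
proof
  fix x
  assume l: "l \<in> {a..c n}"
  have "approx (n + j) (F n l) = D n l" for j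
    using F_inv_F[OF G_in[OF l, of j]] F_G[OF l, of j] D_G[OF l] unfolding approx_def by simp
  then have "eventually (\<lambda>m. approx m (F n l) x = D n l x) sequentially"
    unfolding eventually_sequentially by (metis le_Suc_ex)
  then have "(\<lambda>m. approx m (F n l) x) \<longlonglongrightarrow> D n l x" by (rule tendsto_eventually)
  then show "E (F n l) x = D n l x" using approx_tendsto_E[OF F_le_B[OF l]] LIMSEQ_unique by blast
qed

lemma E_cont: "\<mu> \<le> B \<Longrightarrow> continuous (at \<mu> within {\<mu>..B}) (\<lambda>\<nu>. E \<nu> x)"
  unfolding continuous_at_right_iff
proof (intro allI impI)
  fix e :: real
  assume \<mu>: "\<mu> \<le> B" and e: "e > 0"
  \<comment> \<open>for \<open>\<nu> \<ge> \<mu>\<close>, \<open>norm (E \<mu> x - E \<nu> x)\<^sup>2\<close> is a difference of squared norms, which is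
    approximated by the same difference for \<open>approx n\<close> with \<open>n\<close> large\<close>
  obtain n where n: "(norm (E \<mu> x))^2 - (norm (approx n \<mu> x))^2 < e^2 / 2"
  proof -
    have "(\<lambda>n. (norm (approx n \<mu> x))^2) \<longlonglongrightarrow> (norm (E \<mu> x))^2"
      by (intro tendsto_intros approx_tendsto_E[OF \<mu>])
    then obtain N where "\<forall>n\<ge>N. dist ((norm (approx n \<mu> x))^2) ((norm (E \<mu> x))^2) < e^2 / 2"
      using e unfolding lim_sequentially by (meson half_gt_zero zero_less_power)
    then have "\<bar>(norm (approx N \<mu> x))^2 - (norm (E \<mu> x))^2\<bar> < e^2 / 2"
      unfolding dist_real_def by blast
    then show thesis using that[of N] unfolding abs_less_iff by linarith
  qed
  obtain d where d: "d > 0" "\<And>\<nu>. \<nu> \<in> {\<mu>..B} \<Longrightarrow> \<nu> < \<mu> + d \<Longrightarrow> dist (approx n \<nu> x) (approx n \<mu> x) < e / 2"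
    using approx_cont[OF \<mu>, of n x] e unfolding continuous_at_right_iff by (meson half_gt_zero)
  show "\<exists>d>0. \<forall>\<nu>\<in>{\<mu>..B}. \<nu> < \<mu> + d \<longrightarrow> dist (E \<nu> x) (E \<mu> x) < e"
  proof (intro exI[of _ d] conjI ballI impI)
    fix \<nu> assume \<nu>: "\<nu> \<in> {\<mu>..B}" "\<nu> < \<mu> + d"
    then have \<nu>B: "\<nu> \<le> B" "\<mu> \<le> \<nu>" by auto
    have "(norm (E \<mu> x - E \<nu> x))^2 = (norm (E \<mu> x))^2 - (norm (E \<nu> x))^2"
      by (rule projection_le_norm_diff[OF E_proj[OF \<nu>B(1)] E_proj[OF \<mu>] E_norm_antimono[OF \<nu>B(2,1)]])
    moreover have "(norm (approx n \<mu> x - approx n \<nu> x))^2 = (norm (approx n \<mu> x))^2 - (norm (approx n \<nu> x))^2"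
      by (rule projection_le_norm_diff[OF approx_proj[OF \<nu>B(1)] approx_proj[OF \<mu>]
            approx_norm_antimono[OF \<nu>B(2,1)]])
    moreover have "(norm (approx n \<nu> x))^2 \<le> (norm (E \<nu> x))^2"
      using norm_approx_le_E[OF \<nu>B(1)] by (simp add: power_mono)
    moreover have "norm (approx n \<mu> x - approx n \<nu> x) < e / 2"
      using d(2)[OF \<nu>] by (simp add: dist_norm norm_minus_commute)
    then have "(norm (approx n \<mu> x - approx n \<nu> x))^2 < e^2 / 4"
      using power_strict_mono[of _ "e / 2" 2] by (simp add: power_divide)
    moreover have "0 < e^2" using e by simp
    ultimately have "(norm (E \<mu> x - E \<nu> x))^2 < e^2" using n by linarith
    then show "dist (E \<nu> x) (E \<mu> x) < e"
      using e by (simp add: dist_norm norm_minus_commute power_less_imp_less_base)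
  qed (rule d(1))
qed

theorem common_refinement:
  "\<exists>E. brsr M a B (E a) E \<and> (\<forall>n. strongly_refines a B E a (c n) (D n)) \<and> (\<forall>l\<in>{a..B}. E l \<in> S)"
proof (intro exI[of _ E] conjI ballI allI)
  have EM: "E l \<in> projections M" if "l \<le> B" for l
    using E_proj[OF that] E_mem[OF that] S_subset unfolding projections_def by blast
  show "brsr M a B (E a) E" unfolding brsr_def
  proof (intro conjI ballI allI impI)
    show "a \<le> B" using a_le_c[of 0] c_le[of 0] by simp
    then show "E a \<in> projections M" using EM by simp
    show "E l \<in> projections M" if "l \<in> {a..B}" for l using EM that by simp
    show "op_le (E m) (E l)" if "l \<in> {a..B}" "m \<in> {a..B}" "l \<le> m" for l m
      using op_le_projection_iff[OF E_proj E_proj] E_norm_antimono that by auto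
    show "((\<lambda>m. E m x) \<longlongrightarrow> E l x) (at l within {l..B})" if "l \<in> {a..B}" for l x
      using E_cont[of l x] that unfolding continuous_within by simp
  qed (simp_all add: E_B)
  show "E l \<in> S" if "l \<in> {a..B}" for l using E_mem that by simp
  show "strongly_refines a B E a (c n) (D n)" for n
    unfolding strongly_refines_def strong_refinement_def
  proof (intro exI[of _ "F n"] conjI ballI allI impI)
    show "F n l \<in> {a..B}" if "l \<in> {a..c n}" for l
      using F_ge[OF that] F_le_B[OF that] that by auto
    show "mono_on {a..c n} (F n)" by (rule mono_onI) (rule F_mono; simp)
    show "(F n \<longlongrightarrow> F n l) (at l within {l..c n})" if "l \<in> {a..c n}" for l
      using F_cont[OF that] unfolding continuous_within .
  qed (use F_ge F_le_B F_end E_F F_slope in auto)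
qed

end

lemma Iend_Suc: "Iend al b (Suc n) = b + (\<Sum>i<Suc n. al (Suc i))"
proof -
  have "sum al {1..Suc n} = sum (al \<circ> Suc) {0..n}"
    using sum.atLeast_Suc_atMost_Suc_shift[of al 0 n] by simp
  then show ?thesis unfolding Iend_def by (simp add: atLeast0AtMost lessThan_Suc_atMost)
qed

lemma compatible_common_refinement:
  fixes M S :: "('h::chilbert_space \<Rightarrow> 'h) set" and EE :: "nat \<Rightarrow> real \<Rightarrow> 'h \<Rightarrow> 'h"
  assumes nonneg: "\<And>k. k \<ge> 1 \<Longrightarrow> al k \<ge> 0" and summable: "summable al"
    and compatible: "compatible M al a b EE"
    and S: "S \<subseteq> M" "strong_lim_closed S"
    and EE_mem: "\<forall>k\<ge>1. \<forall>l\<in>{a..Iend al b k}. EE k l \<in> S"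
  shows "\<exists>a' b' p E. brsr M a' b' p E \<and>
           (\<forall>k\<ge>1. strongly_refines a' b' E a (Iend al b k) (EE k)) \<and> (\<forall>l\<in>{a'..b'}. E l \<in> S)"
proof -
  obtain f where f: "\<And>k. k \<ge> 1 \<Longrightarrow>
      strong_refinement a (Iend al b (k + 1)) (EE (k + 1)) (f k) a (Iend al b k) (EE k) \<and>
      (\<forall>l\<in>{a..Iend al b k}. f k l - l \<le> al k)"
    using compatible unfolding compatible_def by metis
  define \<alpha> where "\<alpha> n = al (Suc n)" for n
  define c where "c n = Iend al b (Suc n)" for n
  have "summable \<alpha>" unfolding \<alpha>_def using summable summable_iff_shift[of al 1] by simp
  then have "(\<lambda>n. b + (\<Sum>i<Suc n. \<alpha> i)) \<longlonglongrightarrow> b + (\<Sum>i. \<alpha> i)"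
    by (intro tendsto_intros LIMSEQ_Suc summable_LIMSEQ)
  moreover have "c = (\<lambda>n. b + (\<Sum>i<Suc n. \<alpha> i))"
    unfolding c_def \<alpha>_def by (rule ext) (rule Iend_Suc)
  ultimately have "c \<longlonglongrightarrow> b + (\<Sum>i. \<alpha> i)" by simp
  with \<open>summable \<alpha>\<close> interpret refinement_tower M S a "b + (\<Sum>i. \<alpha> i)" c \<alpha>
      "\<lambda>n. EE (Suc n)" "\<lambda>n. f (Suc n)"
    using nonneg f compatible EE_mem S unfolding compatible_def c_def \<alpha>_def
    by unfold_locales auto
  obtain R where R: "brsr M a (b + (\<Sum>i. \<alpha> i)) (R a) R"
    "\<And>n. strongly_refines a (b + (\<Sum>i. \<alpha> i)) R a (c n) (EE (Suc n))"
    "\<And>l. l \<in> {a..b + (\<Sum>i. \<alpha> i)} \<Longrightarrow> R l \<in> S"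
    using common_refinement by blast
  have "strongly_refines a (b + (\<Sum>i. \<alpha> i)) R a (Iend al b k) (EE k)" if "k \<ge> 1" for k
    using R(2)[of "k - 1"] that unfolding c_def by simp
  then show ?thesis using R(1,3) by blast
qed

theorem lemma3p5:
  fixes M :: "('h::chilbert_space \<Rightarrow> 'h) set"
    and \<tau> :: "('h \<Rightarrow> 'h) \<Rightarrow> complex"
    and al :: "nat \<Rightarrow> real"
    and a b :: real
    and EE :: "nat \<Rightarrow> real \<Rightarrow> 'h \<Rightarrow> 'h"
  assumes "II1_factor M \<tau>"
    and "\<And>k. k \<ge> 1 \<Longrightarrow> al k > 0"
    and "summable al"
    and "compatible M al a b EE"
  shows "(\<exists>a' b' p E. brsr M a' b' p E \<and>
            (\<forall>k\<ge>1. strongly_refines a' b' E a (Iend al b k) (EE k)))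
       \<and> (\<forall>A. masa M A \<and> (\<forall>k\<ge>1. \<forall>l\<in>{a..Iend al b k}. EE k l \<in> A) \<longrightarrow>
            (\<exists>a' b' p E. brsr M a' b' p E \<and>
               (\<forall>k\<ge>1. strongly_refines a' b' E a (Iend al b k) (EE k)) \<and>
               (\<forall>l\<in>{a'..b'}. E l \<in> A)))"
proof (intro conjI allI impI)
  have vna: "von_neumann_algebra M" using assms(1) unfolding II1_factor_def factor_def by blast
  have refine: "\<exists>a' b' p E. brsr M a' b' p E \<and>
      (\<forall>k\<ge>1. strongly_refines a' b' E a (Iend al b k) (EE k)) \<and> (\<forall>l\<in>{a'..b'}. E l \<in> S)"
    if "S \<subseteq> M" "strong_lim_closed S" "\<forall>k\<ge>1. \<forall>l\<in>{a..Iend al b k}. EE k l \<in> S" for S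
  proof (rule compatible_common_refinement[OF _ assms(3,4) that])
    show "0 \<le> al k" if "k \<ge> 1" for k using assms(2)[OF that] by simp
  qed
  have "\<forall>k\<ge>1. \<forall>l\<in>{a..Iend al b k}. EE k l \<in> M"
    using assms(4) unfolding compatible_def brsr_def projections_def by blast
  then show "\<exists>a' b' p E. brsr M a' b' p E \<and> (\<forall>k\<ge>1. strongly_refines a' b' E a (Iend al b k) (EE k))"
    using refine[OF order_refl von_neumann_algebra_strong_lim_closed[OF vna]] by blast
  fix A
  assume A: "masa M A \<and> (\<forall>k\<ge>1. \<forall>l\<in>{a..Iend al b k}. EE k l \<in> A)"
  then have "A \<subseteq> M" unfolding masa_def abelian_star_subalgebra_of_def by blast
  with A show "\<exists>a' b' p E. brsr M a' b' p E \<and> (\<forall>k\<ge>1. strongly_refines a' b' E a (Iend al b k) (EE k)) \<and>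
      (\<forall>l\<in>{a'..b'}. E l \<in> A)"
    using refine masa_strong_lim_closed[OF vna] by blast
qed

end
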